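(* Let $H$ be a $k$-linear semi-Hopf category and let $A$ be an $H$-Galois category extension of $B=A^{{\rm co}H}$. Then for all $x,y,z\in X$ the map $$\delta^x_{yz}:{\rm Hom}_k(H_{xz},A_{zy})\to{}_{B_x}{\rm Hom}(A_{xz},A_{xy}),\qquad\delta^x_{yz}(g)(a)=a_{[0]}g(a_{[1]}),$$ is bijective, with inverse $\varphi\mapsto\big(h\mapsto\sum_i l_i(h)\varphi(r_i(h))\big)$ where $\sum_i l_i(h)\otimes_{B_x}r_i(h)=({\rm can}^z_{xz})^{-1}(1_z\otimes h)$. Moreover $\delta$ is a morphism of clusters $\#(H,A)\to{}_B{\rm End}(A)^{\rm op}$, i.e. $\delta^x_{yu}(g\#g')=\delta^x_{yz}(g)\circ\delta^x_{zu}(g')$ and $\delta^x_{yy}(i^x_y)={\rm id}_{A_{xy}}$; hence $\delta$ is an isomorphism of clusters.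
   Context: Let $k$ be a commutative ring; unadorned $\otimes$ is over $k$. A $k$-linear category $A$ with class of objects $X$ consists of $k$-modules $A_{xy}$, associative compositions $A_{xy}\otimes A_{yz}\to A_{xz}$, $a\otimes b\mapsto ab$, and units $1_x\in A_{xx}$. A $k$-linear semi-Hopf category $H$ (objects $X$) is a $k$-linear category in which each $H_{xy}$ is a $k$-coalgebra with $\Delta_{xy}(h)=h_{(1)}\otimes h_{(2)}$ and counit $\varepsilon_{xy}$, such that $\Delta_{xz}(hh')=h_{(1)}h'_{(1)}\otimes h_{(2)}h'_{(2)}$, $\Delta_{xx}(1_x)=1_x\otimes1_x$, $\varepsilon_{xz}(hh')=\varepsilon_{xy}(h)\varepsilon_{yz}(h')$, $\varepsilon_{xx}(1_x)=1$. A right $H$-comodule category is a $k$-linear category $A$ with objects $X$ such that each $A_{xy}$ is a right $H_{xy}$-comodule, $\rho_{xy}(a)=a_{[0]}\otimes a_{[1]}$, with $\rho_{xz}(ab)=a_{[0]}b_{[0]}\otimes a_{[1]}b_{[1]}$ and $\rho_{xx}(1_x)=1_x\otimes1_x$. Its coinvariants are $B_x=\{a\in A_{xx}\mid\rho_{xx}(a)=a\otimes1_x\}$. $A$ is an $H$-Galois category extension of $B$ if all ${\rm can}^z_{xy}:A_{zx}\otimes_{B_x}A_{xy}\to A_{zy}\otimes H_{xy}$, $a\otimes_{B_x}a'\mapsto aa'_{[0]}\otimes a'_{[1]}$, are bijective. A $k$-linear cluster is a family $(\mathcal{C}^x)_{x\in X}$ of $k$-linear categories with object class $X$; a morphism of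 clusters is a family of $k$-linear functors that are the identity on objects. The Koppinen cluster $\mathcal{C}=\#(H,A)$ has $\mathcal{C}^x_{yz}={\rm Hom}_k(H_{xz},A_{zy})$, with multiplication, for $g\in\mathcal{C}^x_{yz}$, $g'\in\mathcal{C}^x_{zu}$, $h\in H_{xu}$: $(g\#g')(h)=g'(h_{(2)})_{[0]}\,g\big(h_{(1)}g'(h_{(2)})_{[1]}\big)$, and units $i^x_y(h)=\varepsilon_{xy}(h)1_y$. ${}_B{\rm End}(A)^{\rm op}$ is the cluster with components ${}_{B_x}{\rm Hom}(A_{xz},A_{xy})$ in position $(x;y,z)$, multiplied by composition. *)

theory Defs
  imports Main "HOL.Modules" "HOL-Library.Function_Algebras"
begin

text \<open>A k-module is modelled as a k-submodule of an ambient k-module ('v, scale).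
An element of a tensor product M \<otimes> N is represented by a finitely supported
function ('a \<times> 'b \<Rightarrow> 'k) (a finite formal k-linear combination of pairs),
two representatives being equal in the tensor product iff their difference
lies in the k-span of the defining relations.\<close>

definition fsupp :: "('p \<Rightarrow> 'k::zero) \<Rightarrow> 'p set" where
  "fsupp f = {p. f p \<noteq> 0}"

definition sing :: "'p \<Rightarrow> 'p \<Rightarrow> 'k::{zero,one}" where
  "sing p = (\<lambda>q. if q = p then 1 else 0)"

definition fscale :: "'k::times \<Rightarrow> ('p \<Rightarrow> 'k) \<Rightarrow> 'p \<Rightarrow> 'k" where
  "fscale r f = (\<lambda>q. r * f q)"

definition tsum :: "('k \<Rightarrow> 'v \<Rightarrow> 'v) \<Rightarrow> ('p \<Rightarrow> 'k::comm_ring_1) \<Rightarrow> ('p \<Rightarrow> 'v::comm_monoid_add) \<Rightarrow> 'v" where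
  "tsum s f F = (\<Sum>p\<in>fsupp f. s (f p) (F p))"

definition fspan :: "('p \<Rightarrow> 'k::comm_ring_1) set \<Rightarrow> ('p \<Rightarrow> 'k) set" where
  "fspan S = module.span fscale S"

definition trep2 :: "'a set \<Rightarrow> 'b set \<Rightarrow> ('a \<times> 'b \<Rightarrow> 'k::zero) \<Rightarrow> bool" where
  "trep2 M N f \<longleftrightarrow> finite (fsupp f) \<and> fsupp f \<subseteq> M \<times> N"

definition trep3 :: "'a set \<Rightarrow> 'b set \<Rightarrow> 'c set \<Rightarrow> ('a \<times> 'b \<times> 'c \<Rightarrow> 'k::zero) \<Rightarrow> bool" where
  "trep3 M N P f \<longleftrightarrow> finite (fsupp f) \<and> fsupp f \<subseteq> M \<times> N \<times> P"

text \<open>Relations of M \<otimes>_k N, plus extra identifications Bal (used for balanced tensor products).\<close>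
definition rels2 ::
  "('k::comm_ring_1 \<Rightarrow> 'a::ab_group_add \<Rightarrow> 'a) \<Rightarrow> ('k \<Rightarrow> 'b::ab_group_add \<Rightarrow> 'b) \<Rightarrow> 'a set \<Rightarrow> 'b set
   \<Rightarrow> (('a \<times> 'b) \<times> ('a \<times> 'b)) set \<Rightarrow> ('a \<times> 'b \<Rightarrow> 'k) set" where
  "rels2 sM sN M N Bal =
     {sing (m + m', n) - sing (m, n) - sing (m', n) | m m' n. m \<in> M \<and> m' \<in> M \<and> n \<in> N}
   \<union> {sing (m, n + n') - sing (m, n) - sing (m, n') | m n n'. m \<in> M \<and> n \<in> N \<and> n' \<in> N}
   \<union> {sing (sM r m, n) - fscale r (sing (m, n)) | r m n. m \<in> M \<and> n \<in> N}
   \<union> {sing (m, sN r n) - fscale r (sing (m, n)) | r m n. m \<in> M \<and> n \<in> N}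
   \<union> {sing p - sing q | p q. (p, q) \<in> Bal}"

definition teq2 ::
  "('k::comm_ring_1 \<Rightarrow> 'a::ab_group_add \<Rightarrow> 'a) \<Rightarrow> ('k \<Rightarrow> 'b::ab_group_add \<Rightarrow> 'b) \<Rightarrow> 'a set \<Rightarrow> 'b set
   \<Rightarrow> (('a \<times> 'b) \<times> ('a \<times> 'b)) set \<Rightarrow> ('a \<times> 'b \<Rightarrow> 'k) \<Rightarrow> ('a \<times> 'b \<Rightarrow> 'k) \<Rightarrow> bool" where
  "teq2 sM sN M N Bal f g \<longleftrightarrow> trep2 M N f \<and> trep2 M N g \<and> f - g \<in> fspan (rels2 sM sN M N Bal)"

definition rels3 ::
  "('k::comm_ring_1 \<Rightarrow> 'a::ab_group_add \<Rightarrow> 'a) \<Rightarrow> ('k \<Rightarrow> 'b::ab_group_add \<Rightarrow> 'b) \<Rightarrow> ('k \<Rightarrow> 'c::ab_group_add \<Rightarrow> 'c)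
   \<Rightarrow> 'a set \<Rightarrow> 'b set \<Rightarrow> 'c set \<Rightarrow> ('a \<times> 'b \<times> 'c \<Rightarrow> 'k) set" where
  "rels3 sM sN sP M N P =
     {sing (m + m', n, p) - sing (m, n, p) - sing (m', n, p) | m m' n p. m \<in> M \<and> m' \<in> M \<and> n \<in> N \<and> p \<in> P}
   \<union> {sing (m, n + n', p) - sing (m, n, p) - sing (m, n', p) | m n n' p. m \<in> M \<and> n \<in> N \<and> n' \<in> N \<and> p \<in> P}
   \<union> {sing (m, n, p + p') - sing (m, n, p) - sing (m, n, p') | m n p p'. m \<in> M \<and> n \<in> N \<and> p \<in> P \<and> p' \<in> P}
   \<union> {sing (sM r m, n, p) - fscale r (sing (m, n, p)) | r m n p. m \<in> M \<and> n \<in> N \<and> p \<in> P}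
   \<union> {sing (m, sN r n, p) - fscale r (sing (m, n, p)) | r m n p. m \<in> M \<and> n \<in> N \<and> p \<in> P}
   \<union> {sing (m, n, sP r p) - fscale r (sing (m, n, p)) | r m n p. m \<in> M \<and> n \<in> N \<and> p \<in> P}"

definition teq3 ::
  "('k::comm_ring_1 \<Rightarrow> 'a::ab_group_add \<Rightarrow> 'a) \<Rightarrow> ('k \<Rightarrow> 'b::ab_group_add \<Rightarrow> 'b) \<Rightarrow> ('k \<Rightarrow> 'c::ab_group_add \<Rightarrow> 'c)
   \<Rightarrow> 'a set \<Rightarrow> 'b set \<Rightarrow> 'c set \<Rightarrow> ('a \<times> 'b \<times> 'c \<Rightarrow> 'k) \<Rightarrow> ('a \<times> 'b \<times> 'c \<Rightarrow> 'k) \<Rightarrow> bool" where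
  "teq3 sM sN sP M N P f g \<longleftrightarrow> trep3 M N P f \<and> trep3 M N P g \<and> f - g \<in> fspan (rels3 sM sN sP M N P)"

text \<open>(t \<otimes> c) and (a \<otimes> t) for a two-fold tensor t.\<close>
definition tl3 :: "('a \<times> 'b \<Rightarrow> 'k::{times,zero,one}) \<Rightarrow> 'c \<Rightarrow> 'a \<times> 'b \<times> 'c \<Rightarrow> 'k" where
  "tl3 t c = (\<lambda>(a, b, c'). t (a, b) * (if c' = c then 1 else 0))"

definition tr3 :: "'a \<Rightarrow> ('b \<times> 'c \<Rightarrow> 'k::{times,zero,one}) \<Rightarrow> 'a \<times> 'b \<times> 'c \<Rightarrow> 'k" where
  "tr3 a t = (\<lambda>(a', b, c). (if a' = a then 1 else 0) * t (b, c))"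

section \<open>k-linear maps (extensional: 0 outside the domain)\<close>

definition khom :: "('k \<Rightarrow> 'a::ab_group_add \<Rightarrow> 'a) \<Rightarrow> ('k \<Rightarrow> 'b::ab_group_add \<Rightarrow> 'b) \<Rightarrow> 'a set \<Rightarrow> 'b set
   \<Rightarrow> ('a \<Rightarrow> 'b) set" where
  "khom sM sN M N = {f. (\<forall>m\<in>M. f m \<in> N) \<and> (\<forall>m\<in>M. \<forall>m'\<in>M. f (m + m') = f m + f m')
      \<and> (\<forall>r. \<forall>m\<in>M. f (sM r m) = sN r (f m)) \<and> (\<forall>m. m \<notin> M \<longrightarrow> f m = 0)}"

text \<open>Objects: type 'x. Hom-modules C x y are k-submodules of an ambient k-module 'v;
composition m x y z : C x y \<times> C y z \<rightarrow> C x z, a b \<mapsto> ab; units u x.\<close>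
definition klin_cat :: "('k::comm_ring_1 \<Rightarrow> 'v::ab_group_add \<Rightarrow> 'v) \<Rightarrow> ('x \<Rightarrow> 'x \<Rightarrow> 'v set)
   \<Rightarrow> ('x \<Rightarrow> 'x \<Rightarrow> 'x \<Rightarrow> 'v \<Rightarrow> 'v \<Rightarrow> 'v) \<Rightarrow> ('x \<Rightarrow> 'v) \<Rightarrow> bool" where
  "klin_cat s C m u \<longleftrightarrow> module s \<and> (\<forall>x y. module.subspace s (C x y))
    \<and> (\<forall>x y z. \<forall>a\<in>C x y. \<forall>b\<in>C y z. m x y z a b \<in> C x z)
    \<and> (\<forall>x y z. \<forall>a\<in>C x y. \<forall>a'\<in>C x y. \<forall>b\<in>C y z. m x y z (a + a') b = m x y z a b + m x y z a' b)
    \<and> (\<forall>x y z. \<forall>a\<in>C x y. \<forall>b\<in>C y z. \<forall>b'\<in>C y z. m x y z a (b + b') = m x y z a b + m x y z a b')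
    \<and> (\<forall>x y z r. \<forall>a\<in>C x y. \<forall>b\<in>C y z. m x y z (s r a) b = s r (m x y z a b))
    \<and> (\<forall>x y z r. \<forall>a\<in>C x y. \<forall>b\<in>C y z. m x y z a (s r b) = s r (m x y z a b))
    \<and> (\<forall>x y z w. \<forall>a\<in>C x y. \<forall>b\<in>C y z. \<forall>c\<in>C z w.
         m x y w a (m y z w b c) = m x z w (m x y z a b) c)
    \<and> (\<forall>x. u x \<in> C x x)
    \<and> (\<forall>x y. \<forall>a\<in>C x y. m x x y (u x) a = a \<and> m x y y a (u y) = a)"

definition kcoalg :: "('k::comm_ring_1 \<Rightarrow> 'h::ab_group_add \<Rightarrow> 'h) \<Rightarrow> 'h set
   \<Rightarrow> ('h \<Rightarrow> 'h \<times> 'h \<Rightarrow> 'k) \<Rightarrow> ('h \<Rightarrow> 'k) \<Rightarrow> bool" where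
  "kcoalg s M D e \<longleftrightarrow>
      (\<forall>h\<in>M. trep2 M M (D h))
    \<and> (\<forall>h\<in>M. \<forall>h'\<in>M. teq2 s s M M {} (D (h + h')) (D h + D h'))
    \<and> (\<forall>r. \<forall>h\<in>M. teq2 s s M M {} (D (s r h)) (fscale r (D h)))
    \<and> (\<forall>h\<in>M. \<forall>h'\<in>M. e (h + h') = e h + e h')
    \<and> (\<forall>r. \<forall>h\<in>M. e (s r h) = r * e h)
    \<and> (\<forall>h\<in>M. teq3 s s s M M M (tsum fscale (D h) (\<lambda>p. tl3 (D (fst p)) (snd p)))
                                 (tsum fscale (D h) (\<lambda>p. tr3 (fst p) (D (snd p)))))
    \<and> (\<forall>h\<in>M. tsum s (D h) (\<lambda>p. s (e (fst p)) (snd p)) = h)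
    \<and> (\<forall>h\<in>M. tsum s (D h) (\<lambda>p. s (e (snd p)) (fst p)) = h)"

definition kcomod :: "('k::comm_ring_1 \<Rightarrow> 'h::ab_group_add \<Rightarrow> 'h) \<Rightarrow> 'h set
   \<Rightarrow> ('h \<Rightarrow> 'h \<times> 'h \<Rightarrow> 'k) \<Rightarrow> ('h \<Rightarrow> 'k)
   \<Rightarrow> ('k \<Rightarrow> 'a::ab_group_add \<Rightarrow> 'a) \<Rightarrow> 'a set \<Rightarrow> ('a \<Rightarrow> 'a \<times> 'h \<Rightarrow> 'k) \<Rightarrow> bool" where
  "kcomod sH M D e sA N rho \<longleftrightarrow>
      (\<forall>a\<in>N. trep2 N M (rho a))
    \<and> (\<forall>a\<in>N. \<forall>a'\<in>N. teq2 sA sH N M {} (rho (a + a')) (rho a + rho a'))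
    \<and> (\<forall>r. \<forall>a\<in>N. teq2 sA sH N M {} (rho (sA r a)) (fscale r (rho a)))
    \<and> (\<forall>a\<in>N. teq3 sA sH sH N M M (tsum fscale (rho a) (\<lambda>p. tl3 (rho (fst p)) (snd p)))
                                   (tsum fscale (rho a) (\<lambda>p. tr3 (fst p) (D (snd p)))))
    \<and> (\<forall>a\<in>N. tsum sA (rho a) (\<lambda>p. sA (e (snd p)) (fst p)) = a)"

definition semi_hopf_cat :: "('k::comm_ring_1 \<Rightarrow> 'h::ab_group_add \<Rightarrow> 'h) \<Rightarrow> ('x \<Rightarrow> 'x \<Rightarrow> 'h set)
   \<Rightarrow> ('x \<Rightarrow> 'x \<Rightarrow> 'x \<Rightarrow> 'h \<Rightarrow> 'h \<Rightarrow> 'h) \<Rightarrow> ('x \<Rightarrow> 'h)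
   \<Rightarrow> ('x \<Rightarrow> 'x \<Rightarrow> 'h \<Rightarrow> 'h \<times> 'h \<Rightarrow> 'k) \<Rightarrow> ('x \<Rightarrow> 'x \<Rightarrow> 'h \<Rightarrow> 'k) \<Rightarrow> bool" where
  "semi_hopf_cat sH H mH uH DH eH \<longleftrightarrow> klin_cat sH H mH uH
    \<and> (\<forall>x y. kcoalg sH (H x y) (DH x y) (eH x y))
    \<and> (\<forall>x y z. \<forall>h\<in>H x y. \<forall>h'\<in>H y z.
         teq2 sH sH (H x z) (H x z) {} (DH x z (mH x y z h h'))
           (tsum fscale (DH x y h) (\<lambda>p. tsum fscale (DH y z h')
              (\<lambda>q. sing (mH x y z (fst p) (fst q), mH x y z (snd p) (snd q))))))
    \<and> (\<forall>x. teq2 sH sH (H x x) (H x x) {} (DH x x (uH x)) (sing (uH x, uH x)))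
    \<and> (\<forall>x y z. \<forall>h\<in>H x y. \<forall>h'\<in>H y z. eH x z (mH x y z h h') = eH x y h * eH y z h')
    \<and> (\<forall>x. eH x x (uH x) = 1)"

definition comodule_cat :: "('k::comm_ring_1 \<Rightarrow> 'h::ab_group_add \<Rightarrow> 'h) \<Rightarrow> ('x \<Rightarrow> 'x \<Rightarrow> 'h set)
   \<Rightarrow> ('x \<Rightarrow> 'x \<Rightarrow> 'x \<Rightarrow> 'h \<Rightarrow> 'h \<Rightarrow> 'h) \<Rightarrow> ('x \<Rightarrow> 'h)
   \<Rightarrow> ('x \<Rightarrow> 'x \<Rightarrow> 'h \<Rightarrow> 'h \<times> 'h \<Rightarrow> 'k) \<Rightarrow> ('x \<Rightarrow> 'x \<Rightarrow> 'h \<Rightarrow> 'k)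
   \<Rightarrow> ('k \<Rightarrow> 'a::ab_group_add \<Rightarrow> 'a) \<Rightarrow> ('x \<Rightarrow> 'x \<Rightarrow> 'a set)
   \<Rightarrow> ('x \<Rightarrow> 'x \<Rightarrow> 'x \<Rightarrow> 'a \<Rightarrow> 'a \<Rightarrow> 'a) \<Rightarrow> ('x \<Rightarrow> 'a)
   \<Rightarrow> ('x \<Rightarrow> 'x \<Rightarrow> 'a \<Rightarrow> 'a \<times> 'h \<Rightarrow> 'k) \<Rightarrow> bool" where
  "comodule_cat sH H mH uH DH eH sA A mA uA rho \<longleftrightarrow> klin_cat sA A mA uA
    \<and> (\<forall>x y. kcomod sH (H x y) (DH x y) (eH x y) sA (A x y) (rho x y))
    \<and> (\<forall>x y z. \<forall>a\<in>A x y. \<forall>b\<in>A y z.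
         teq2 sA sH (A x z) (H x z) {} (rho x z (mA x y z a b))
           (tsum fscale (rho x y a) (\<lambda>p. tsum fscale (rho y z b)
              (\<lambda>q. sing (mA x y z (fst p) (fst q), mH x y z (snd p) (snd q))))))
    \<and> (\<forall>x. teq2 sA sH (A x x) (H x x) {} (rho x x (uA x)) (sing (uA x, uH x)))"

definition coinv :: "('k::comm_ring_1 \<Rightarrow> 'h::ab_group_add \<Rightarrow> 'h) \<Rightarrow> ('x \<Rightarrow> 'x \<Rightarrow> 'h set) \<Rightarrow> ('x \<Rightarrow> 'h)
   \<Rightarrow> ('k \<Rightarrow> 'a::ab_group_add \<Rightarrow> 'a) \<Rightarrow> ('x \<Rightarrow> 'x \<Rightarrow> 'a set)
   \<Rightarrow> ('x \<Rightarrow> 'x \<Rightarrow> 'a \<Rightarrow> 'a \<times> 'h \<Rightarrow> 'k) \<Rightarrow> 'x \<Rightarrow> 'a set" where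
  "coinv sH H uH sA A rho x = {a \<in> A x x. teq2 sA sH (A x x) (H x x) {} (rho x x a) (sing (a, uH x))}"

text \<open>Identifications making A_zx \<otimes> A_xy into A_zx \<otimes>_{B_x} A_xy.\<close>
definition balB :: "('x \<Rightarrow> 'x \<Rightarrow> 'a set) \<Rightarrow> ('x \<Rightarrow> 'x \<Rightarrow> 'x \<Rightarrow> 'a \<Rightarrow> 'a \<Rightarrow> 'a) \<Rightarrow> 'a set
   \<Rightarrow> 'x \<Rightarrow> 'x \<Rightarrow> 'x \<Rightarrow> (('a \<times> 'a) \<times> ('a \<times> 'a)) set" where
  "balB A mA B z x y = {((mA z x x a b, a'), (a, mA x x y b a')) | a b a'. a \<in> A z x \<and> b \<in> B \<and> a' \<in> A x y}"

text \<open>can^z_{xy}(a \<otimes> a') = a a'_[0] \<otimes> a'_[1], on representatives.\<close>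
definition can :: "('x \<Rightarrow> 'x \<Rightarrow> 'x \<Rightarrow> 'a \<Rightarrow> 'a \<Rightarrow> 'a) \<Rightarrow> ('x \<Rightarrow> 'x \<Rightarrow> 'a \<Rightarrow> 'a \<times> 'h \<Rightarrow> 'k::comm_ring_1)
   \<Rightarrow> 'x \<Rightarrow> 'x \<Rightarrow> 'x \<Rightarrow> ('a \<times> 'a \<Rightarrow> 'k) \<Rightarrow> 'a \<times> 'h \<Rightarrow> 'k" where
  "can mA rho z x y f = tsum fscale f (\<lambda>p. tsum fscale (rho x y (snd p))
       (\<lambda>q. sing (mA z x y (fst p) (fst q), snd q)))"

definition galois_ext :: "('k::comm_ring_1 \<Rightarrow> 'h::ab_group_add \<Rightarrow> 'h) \<Rightarrow> ('x \<Rightarrow> 'x \<Rightarrow> 'h set) \<Rightarrow> ('x \<Rightarrow> 'h)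
   \<Rightarrow> ('k \<Rightarrow> 'a::ab_group_add \<Rightarrow> 'a) \<Rightarrow> ('x \<Rightarrow> 'x \<Rightarrow> 'a set)
   \<Rightarrow> ('x \<Rightarrow> 'x \<Rightarrow> 'x \<Rightarrow> 'a \<Rightarrow> 'a \<Rightarrow> 'a) \<Rightarrow> ('x \<Rightarrow> 'x \<Rightarrow> 'a \<Rightarrow> 'a \<times> 'h \<Rightarrow> 'k) \<Rightarrow> bool" where
  "galois_ext sH H uH sA A mA rho \<longleftrightarrow> (\<forall>x y z.
      (\<forall>f g. trep2 (A z x) (A x y) f \<and> trep2 (A z x) (A x y) g
         \<and> teq2 sA sH (A z y) (H x y) {} (can mA rho z x y f) (can mA rho z x y g)
         \<longrightarrow> teq2 sA sA (A z x) (A x y) (balB A mA (coinv sH H uH sA A rho x) z x y) f g)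
    \<and> (\<forall>t. trep2 (A z y) (H x y) t \<longrightarrow>
         (\<exists>f. trep2 (A z x) (A x y) f \<and> teq2 sA sH (A z y) (H x y) {} (can mA rho z x y f) t)))"

definition bhom :: "('k::comm_ring_1 \<Rightarrow> 'h::ab_group_add \<Rightarrow> 'h) \<Rightarrow> ('x \<Rightarrow> 'x \<Rightarrow> 'h set) \<Rightarrow> ('x \<Rightarrow> 'h)
   \<Rightarrow> ('k \<Rightarrow> 'a::ab_group_add \<Rightarrow> 'a) \<Rightarrow> ('x \<Rightarrow> 'x \<Rightarrow> 'a set)
   \<Rightarrow> ('x \<Rightarrow> 'x \<Rightarrow> 'x \<Rightarrow> 'a \<Rightarrow> 'a \<Rightarrow> 'a) \<Rightarrow> ('x \<Rightarrow> 'x \<Rightarrow> 'a \<Rightarrow> 'a \<times> 'h \<Rightarrow> 'k)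
   \<Rightarrow> 'x \<Rightarrow> 'x \<Rightarrow> 'x \<Rightarrow> ('a \<Rightarrow> 'a) set" where
  "bhom sH H uH sA A mA rho x z y = {\<phi> \<in> khom sA sA (A x z) (A x y).
      \<forall>b\<in>coinv sH H uH sA A rho x. \<forall>a\<in>A x z. \<phi> (mA x x z b a) = mA x x y b (\<phi> a)}"

definition delta :: "('k::comm_ring_1 \<Rightarrow> 'a::ab_group_add \<Rightarrow> 'a) \<Rightarrow> ('x \<Rightarrow> 'x \<Rightarrow> 'a set)
   \<Rightarrow> ('x \<Rightarrow> 'x \<Rightarrow> 'x \<Rightarrow> 'a \<Rightarrow> 'a \<Rightarrow> 'a) \<Rightarrow> ('x \<Rightarrow> 'x \<Rightarrow> 'a \<Rightarrow> 'a \<times> 'h \<Rightarrow> 'k)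
   \<Rightarrow> 'x \<Rightarrow> 'x \<Rightarrow> 'x \<Rightarrow> ('h \<Rightarrow> 'a) \<Rightarrow> 'a \<Rightarrow> 'a" where
  "delta sA A mA rho x y z g = (\<lambda>a. if a \<in> A x z
      then tsum sA (rho x z a) (\<lambda>p. mA x z y (fst p) (g (snd p))) else 0)"

text \<open>Koppinen product: for g in C^x_{yz}, g' in C^x_{zu}, h in H_xu:
  (g#g')(h) = g'(h_(2))_[0] g(h_(1) g'(h_(2))_[1]).\<close>
definition kop :: "('k::comm_ring_1 \<Rightarrow> 'a::ab_group_add \<Rightarrow> 'a) \<Rightarrow> ('x \<Rightarrow> 'x \<Rightarrow> 'h set)
   \<Rightarrow> ('x \<Rightarrow> 'x \<Rightarrow> 'x \<Rightarrow> 'h \<Rightarrow> 'h \<Rightarrow> 'h) \<Rightarrow> ('x \<Rightarrow> 'x \<Rightarrow> 'h \<Rightarrow> 'h \<times> 'h \<Rightarrow> 'k)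
   \<Rightarrow> ('x \<Rightarrow> 'x \<Rightarrow> 'x \<Rightarrow> 'a \<Rightarrow> 'a \<Rightarrow> 'a) \<Rightarrow> ('x \<Rightarrow> 'x \<Rightarrow> 'a \<Rightarrow> 'a \<times> 'h \<Rightarrow> 'k)
   \<Rightarrow> 'x \<Rightarrow> 'x \<Rightarrow> 'x \<Rightarrow> 'x \<Rightarrow> ('h \<Rightarrow> 'a) \<Rightarrow> ('h \<Rightarrow> 'a) \<Rightarrow> 'h \<Rightarrow> 'a" where
  "kop sA H mH DH mA rho x y z u g g' = (\<lambda>h. if h \<in> H x u
      then tsum sA (DH x u h) (\<lambda>p. tsum sA (rho u z (g' (snd p)))
             (\<lambda>q. mA u z y (fst q) (g (mH x u z (fst p) (snd q)))))
      else 0)"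

text \<open>Unit of the Koppinen cluster: i^x_y(h) = eps_xy(h) 1_y.\<close>
definition kunit :: "('k::comm_ring_1 \<Rightarrow> 'a::ab_group_add \<Rightarrow> 'a) \<Rightarrow> ('x \<Rightarrow> 'x \<Rightarrow> 'h set)
   \<Rightarrow> ('x \<Rightarrow> 'x \<Rightarrow> 'h \<Rightarrow> 'k) \<Rightarrow> ('x \<Rightarrow> 'a) \<Rightarrow> 'x \<Rightarrow> 'x \<Rightarrow> 'h \<Rightarrow> 'a" where
  "kunit sA H eH uA x y = (\<lambda>h. if h \<in> H x y then sA (eH x y h) (uA y) else 0)"

end

theory Submission
  imports Defs
begin

text \<open>
  \<open>\<delta>(g)(a) = a\<^sub>[\<^sub>0\<^sub>] g(a\<^sub>[\<^sub>1\<^sub>])\<close> is \<open>B\<close>-linear because a coinvariant \<open>b\<close> has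
  \<open>\<rho>(b a) = b a\<^sub>[\<^sub>0\<^sub>] \<otimes> a\<^sub>[\<^sub>1\<^sub>]\<close>. It is injective, since \<open>g(h) = \<Sum>\<^sub>i l\<^sub>i(h) \<delta>(g)(r\<^sub>i(h))\<close>
  where \<open>\<Sum>\<^sub>i l\<^sub>i(h) \<otimes>\<^sub>B r\<^sub>i(h) = can\<^sup>-\<^sup>1(1 \<otimes> h)\<close>. Conversely, for \<open>B\<close>-linear \<open>\<phi>\<close> the map
  \<open>h \<mapsto> \<Sum>\<^sub>i l\<^sub>i(h) \<phi>(r\<^sub>i(h))\<close> is well defined because \<open>\<phi>\<close> factors through \<open>A \<otimes>\<^sub>B A\<close>, and
  \<open>\<delta>\<close> sends it back to \<open>\<phi>\<close> by the identity \<open>a\<^sub>[\<^sub>0\<^sub>] l\<^sub>i(a\<^sub>[\<^sub>1\<^sub>]) \<otimes>\<^sub>B r\<^sub>i(a\<^sub>[\<^sub>1\<^sub>]) = 1 \<otimes>\<^sub>B a\<close>,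
  whose two sides have the same image \<open>\<rho>(a)\<close> under the injective map \<open>can\<close>. Compatibility
  with the Koppinen product is coassociativity of \<open>\<rho>\<close>, and the unit is preserved by the counit
  axiom. Since tensors are formal sums modulo relations, each step evaluates a multilinear map
  on two equivalent representatives.
\<close>

lemma module_fscale: "module (fscale :: 'k::comm_ring_1 \<Rightarrow> ('p \<Rightarrow> 'k) \<Rightarrow> ('p \<Rightarrow> 'k))"
  by unfold_locales (auto simp: fscale_def fun_eq_iff algebra_simps)

lemma fsupp_zero [simp]: "fsupp 0 = {}"
  by (simp add: fsupp_def)

lemma fsupp_add: "fsupp (f + g :: _ \<Rightarrow> 'k::ab_group_add) \<subseteq> fsupp f \<union> fsupp g"
  by (auto simp: fsupp_def)

lemma fsupp_diff: "fsupp (f - g :: _ \<Rightarrow> 'k::ab_group_add) \<subseteq> fsupp f \<union> fsupp g"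
  by (auto simp: fsupp_def)

lemma fsupp_uminus: "fsupp (- f :: _ \<Rightarrow> 'k::ab_group_add) = fsupp f"
  by (auto simp: fsupp_def)

lemma fsupp_fscale: "fsupp (fscale r f :: _ \<Rightarrow> 'k::comm_ring_1) \<subseteq> fsupp f"
  by (auto simp: fsupp_def fscale_def)

lemma fsupp_sing: "fsupp (sing p :: _ \<Rightarrow> 'k::{zero,one}) \<subseteq> {p}"
  by (auto simp: fsupp_def sing_def)

lemma fsupp_sum: "fsupp (\<Sum>a\<in>S. G a :: _ \<Rightarrow> 'k::ab_group_add) \<subseteq> (\<Union>a\<in>S. fsupp (G a))"
  by (induction S rule: infinite_finite_induct) (auto simp: fsupp_def)

lemma finite_fsupp_sing: "finite (fsupp (sing p :: _ \<Rightarrow> 'k::{zero,one}))"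
  using fsupp_sing[of p] by (rule finite_subset) simp

lemma finite_fsupp_diff:
  "finite (fsupp f) \<Longrightarrow> finite (fsupp g) \<Longrightarrow> finite (fsupp (f - g :: _ \<Rightarrow> 'k::ab_group_add))"
  by (rule finite_subset[OF fsupp_diff]) auto

lemma finite_fsupp_fscale: "finite (fsupp f) \<Longrightarrow> finite (fsupp (fscale r f :: _ \<Rightarrow> 'k::comm_ring_1))"
  by (rule finite_subset[OF fsupp_fscale])

lemma fscale_diff: "fscale r (a - b) = fscale r a - fscale r (b :: _ \<Rightarrow> 'k::comm_ring_1)"
  by (simp add: fscale_def fun_eq_iff algebra_simps)

lemma tsum_eq_sum_superset:
  assumes "module s" "finite S" "fsupp f \<subseteq> S"
  shows "tsum s f F = (\<Sum>p\<in>S. s (f p) (F p))"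
  unfolding tsum_def
  by (rule sum.mono_neutral_left) (use assms in \<open>auto simp: fsupp_def module.scale_zero_left\<close>)

lemma tsum_zero [simp]: "tsum s 0 F = 0"
  by (simp add: tsum_def)

lemma tsum_cong: "(\<And>p. p \<in> fsupp f \<Longrightarrow> F p = G p) \<Longrightarrow> tsum s f F = tsum s f G"
  unfolding tsum_def by (rule sum.cong) auto

lemma tsum_cong_simp:
  "f = f' \<Longrightarrow> (\<And>p. p \<in> fsupp f' \<Longrightarrow> F p = G p) \<Longrightarrow> tsum s f F = tsum s f' G"
  unfolding tsum_def by (rule sum.cong) auto

lemma tsum_add:
  assumes "module s" "finite (fsupp f)" "finite (fsupp g)"
  shows "tsum s (f + g) F = tsum s f F + tsum s g F"
proof -
  let ?S = "fsupp f \<union> fsupp g"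
  have "tsum s (f + g) F = (\<Sum>p\<in>?S. s ((f + g) p) (F p))"
    using assms fsupp_add[of f g] by (intro tsum_eq_sum_superset) auto
  also have "\<dots> = (\<Sum>p\<in>?S. s (f p) (F p)) + (\<Sum>p\<in>?S. s (g p) (F p))"
    by (simp add: module.scale_left_distrib[OF assms(1)] sum.distrib)
  also have "\<dots> = tsum s f F + tsum s g F"
    using assms by (simp add: tsum_eq_sum_superset[of s ?S])
  finally show ?thesis .
qed

lemma tsum_fscale:
  assumes "module s" "finite (fsupp f)"
  shows "tsum s (fscale r f) F = s r (tsum s f F)"
proof -
  have "tsum s (fscale r f) F = (\<Sum>p\<in>fsupp f. s (fscale r f p) (F p))"
    using assms fsupp_fscale[of r f] by (intro tsum_eq_sum_superset) auto
  also have "\<dots> = s r (tsum s f F)"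
    by (simp add: tsum_def module.scale_sum_right[OF assms(1)] fscale_def module.scale_scale[OF assms(1)])
  finally show ?thesis .
qed

lemma tsum_uminus: "module s \<Longrightarrow> tsum s (- f) F = - tsum s f F"
  by (simp add: tsum_def fsupp_uminus module.scale_minus_left sum_negf)

lemma tsum_diff:
  assumes "module s" "finite (fsupp f)" "finite (fsupp g)"
  shows "tsum s (f - g) F = tsum s f F - tsum s g F"
  using tsum_add[OF assms(1,2), of "- g" F] assms by (simp add: fsupp_uminus tsum_uminus)

lemma tsum_sing:
  assumes "module s"
  shows "tsum s (sing p) F = F p"
proof -
  have "tsum s (sing p) F = (\<Sum>q\<in>{p}. s (sing p q) (F q))"
    using assms fsupp_sing[of p] by (intro tsum_eq_sum_superset) auto
  then show ?thesis by (simp add: sing_def module.scale_one[OF assms])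
qed

lemma tsum_add_right: "module s \<Longrightarrow> tsum s f (\<lambda>p. F p + G p) = tsum s f F + tsum s f G"
  by (simp add: tsum_def module.scale_right_distrib sum.distrib)

lemma tsum_diff_right: "module s \<Longrightarrow> tsum s f (\<lambda>p. F p - G p) = tsum s f F - tsum s f G"
  by (simp add: tsum_def module.scale_right_diff_distrib sum_subtractf)

lemma tsum_scale_right: "module s \<Longrightarrow> tsum s f (\<lambda>p. s r (F p)) = s r (tsum s f F)"
  by (simp add: tsum_def module.scale_sum_right module.scale_scale mult.commute)

lemma tsum_in_subspace:
  assumes "module s" "module.subspace s V" "\<And>p. p \<in> fsupp f \<Longrightarrow> F p \<in> V"
  shows "tsum s f F \<in> V"
  unfolding tsum_def using assms
  by (intro module.subspace_sum[OF assms(1,2)] module.subspace_scale[OF assms(1,2)]) auto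

lemma tsum_sum:
  assumes "module s" "finite S" "\<And>a. a \<in> S \<Longrightarrow> finite (fsupp (G a))"
  shows "tsum s (\<Sum>a\<in>S. G a) F = (\<Sum>a\<in>S. tsum s (G a) F)"
  using assms(2,3)
proof (induction S rule: finite_induct)
  case (insert x S)
  have "finite (fsupp (\<Sum>a\<in>S. G a))"
    by (rule finite_subset[OF fsupp_sum]) (use insert in auto)
  have "tsum s (\<Sum>a\<in>insert x S. G a) F = tsum s (G x + (\<Sum>a\<in>S. G a)) F"
    by (simp only: sum.insert[OF insert(1,2)])
  also have "\<dots> = tsum s (G x) F + tsum s (\<Sum>a\<in>S. G a) F"
    by (rule tsum_add[OF assms(1)]) (use insert \<open>finite (fsupp (\<Sum>a\<in>S. G a))\<close> in auto)
  also have "\<dots> = (\<Sum>a\<in>insert x S. tsum s (G a) F)"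
    using insert by simp
  finally show ?case .
qed simp

lemma fsupp_tsum_fscale:
  "fsupp (tsum fscale f G :: _ \<Rightarrow> 'k::comm_ring_1) \<subseteq> (\<Union>p\<in>fsupp f. fsupp (G p))"
  unfolding tsum_def by (rule order_trans[OF fsupp_sum], rule UN_mono[OF order_refl fsupp_fscale])

lemma finite_fsupp_tsum_fscale:
  assumes "finite (fsupp f)" "\<And>p. p \<in> fsupp f \<Longrightarrow> finite (fsupp (G p))"
  shows "finite (fsupp (tsum fscale f G :: _ \<Rightarrow> 'k::comm_ring_1))"
  using fsupp_tsum_fscale[of f G] assms by (meson finite_UN_I finite_subset)

lemma tsum_tsum:
  assumes "module s" "finite (fsupp f)" "\<And>p. p \<in> fsupp f \<Longrightarrow> finite (fsupp (G p))"
  shows "tsum s (tsum fscale f G :: _ \<Rightarrow> 'k::comm_ring_1) F = tsum s f (\<lambda>p. tsum s (G p) F)"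
proof -
  have "tsum s (tsum fscale f G) F = (\<Sum>p\<in>fsupp f. tsum s (fscale (f p) (G p)) F)"
    unfolding tsum_def[of fscale] using assms
    by (intro tsum_sum) (auto intro: finite_subset[OF fsupp_fscale])
  also have "\<dots> = tsum s f (\<lambda>p. tsum s (G p) F)"
    unfolding tsum_def[of s f] using assms by (intro sum.cong) (auto simp: tsum_fscale)
  finally show ?thesis .
qed

lemma sum_fun_apply: "(\<Sum>a\<in>S. G a) q = (\<Sum>a\<in>S. G a q :: 'b::comm_monoid_add)"
  by (induction S rule: infinite_finite_induct) auto

lemma tsum_fscale_sing:
  assumes "finite (fsupp f)"
  shows "tsum fscale f sing = (f :: _ \<Rightarrow> 'k::comm_ring_1)"
proof
  fix q
  have "tsum fscale f sing q = (\<Sum>p\<in>fsupp f. if p = q then f q else 0)"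
    unfolding tsum_def fscale_def sum_fun_apply by (intro sum.cong) (auto simp: sing_def)
  also have "\<dots> = f q"
    using assms by (simp add: fsupp_def)
  finally show "tsum fscale f sing q = f q" .
qed

definition linear_on :: "('k \<Rightarrow> 'v::ab_group_add \<Rightarrow> 'v) \<Rightarrow> ('k \<Rightarrow> 'w::ab_group_add \<Rightarrow> 'w)
    \<Rightarrow> 'v set \<Rightarrow> 'w set \<Rightarrow> ('v \<Rightarrow> 'w) \<Rightarrow> bool"
  where "linear_on s s' V W L \<longleftrightarrow> (\<forall>v\<in>V. L v \<in> W)
    \<and> (\<forall>v\<in>V. \<forall>v'\<in>V. L (v + v') = L v + L v') \<and> (\<forall>r. \<forall>v\<in>V. L (s r v) = s' r (L v))"

lemma tsum_linear:
  assumes "module s" "module.subspace s V" "linear_on s s' V W L" "\<And>p. p \<in> fsupp f \<Longrightarrow> G p \<in> V"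
  shows "L (tsum s f G) = tsum s' f (\<lambda>p. L (G p))"
proof -
  have add: "L (v + v') = L v + L v'" if "v \<in> V" "v' \<in> V" for v v'
    using assms(3) that by (simp add: linear_on_def)
  have "0 \<in> V" by (rule module.subspace_0[OF assms(1,2)])
  then have zero: "L 0 = 0" using add[of 0 0] by simp
  have "L (\<Sum>p\<in>S. s (f p) (G p)) = (\<Sum>p\<in>S. s' (f p) (L (G p)))" if "S \<subseteq> fsupp f" for S
    using that
  proof (induction S rule: infinite_finite_induct)
    case (insert p S)
    have Gp: "G p \<in> V" and GS: "(\<Sum>q\<in>S. s (f q) (G q)) \<in> V"
      using insert.prems assms(4)
      by (auto intro!: module.subspace_sum[OF assms(1,2)] module.subspace_scale[OF assms(1,2)])
    have "L (s (f p) (G p)) = s' (f p) (L (G p))"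
      using assms(3) Gp by (simp add: linear_on_def)
    then show ?case
      using insert add[OF module.subspace_scale[OF assms(1,2) Gp] GS] by simp
  qed (simp_all add: zero)
  then show ?thesis by (simp add: tsum_def)
qed

lemma trep2_add: "trep2 M N f \<Longrightarrow> trep2 M N g \<Longrightarrow> trep2 M N (f + g :: _ \<Rightarrow> 'k::ab_group_add)"
  unfolding trep2_def by (meson Un_least finite_UnI finite_subset fsupp_add order_trans)

lemma trep2_fscale: "trep2 M N f \<Longrightarrow> trep2 M N (fscale r f :: _ \<Rightarrow> 'k::comm_ring_1)"
  unfolding trep2_def by (meson finite_subset fsupp_fscale order_trans)

lemma trep2_sing: "m \<in> M \<Longrightarrow> n \<in> N \<Longrightarrow> trep2 M N (sing (m, n) :: _ \<Rightarrow> 'k::{zero,one})"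
  unfolding trep2_def using fsupp_sing[of "(m, n)"] by (auto intro: finite_subset)

lemma trep2_tsum:
  assumes "finite (fsupp f)" "\<And>p. p \<in> fsupp f \<Longrightarrow> trep2 M N (G p)"
  shows "trep2 M N (tsum fscale f G :: _ \<Rightarrow> 'k::comm_ring_1)"
  unfolding trep2_def
proof
  show "finite (fsupp (tsum fscale f G))"
    by (rule finite_fsupp_tsum_fscale) (use assms in \<open>auto simp: trep2_def\<close>)
  show "fsupp (tsum fscale f G) \<subseteq> M \<times> N"
    by (rule order_trans[OF fsupp_tsum_fscale]) (use assms in \<open>auto simp: trep2_def\<close>)
qed

lemma fspan_add: "a \<in> fspan R \<Longrightarrow> b \<in> fspan R \<Longrightarrow> a + b \<in> fspan (R :: (_ \<Rightarrow> 'k::comm_ring_1) set)"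
  unfolding fspan_def by (rule module.span_add[OF module_fscale])

lemma fspan_neg: "a \<in> fspan R \<Longrightarrow> - a \<in> fspan (R :: (_ \<Rightarrow> 'k::comm_ring_1) set)"
  unfolding fspan_def by (rule module.span_neg[OF module_fscale])

lemma fspan_scale: "a \<in> fspan R \<Longrightarrow> fscale r a \<in> fspan (R :: (_ \<Rightarrow> 'k::comm_ring_1) set)"
  unfolding fspan_def by (rule module.span_scale[OF module_fscale])

lemma fspan_base: "a \<in> R \<Longrightarrow> a \<in> fspan (R :: (_ \<Rightarrow> 'k::comm_ring_1) set)"
  unfolding fspan_def by (rule module.span_base[OF module_fscale])

lemma subspace_fspan: "module.subspace fscale (fspan (R :: (_ \<Rightarrow> 'k::comm_ring_1) set))"
  unfolding fspan_def by (rule module.subspace_span[OF module_fscale])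

lemma teq2_sym: "teq2 sM sN M N Bal f g \<Longrightarrow> teq2 sM sN M N Bal g f"
  unfolding teq2_def using fspan_neg by fastforce

lemma teq2_trans: "teq2 sM sN M N Bal f g \<Longrightarrow> teq2 sM sN M N Bal g h \<Longrightarrow> teq2 sM sN M N Bal f h"
  unfolding teq2_def using fspan_add by fastforce

lemma teq2_add:
  "teq2 sM sN M N Bal f g \<Longrightarrow> teq2 sM sN M N Bal f' g' \<Longrightarrow> teq2 sM sN M N Bal (f + f') (g + g')"
  unfolding teq2_def using fspan_add[of "f - g" _ "f' - g'"]
  by (auto intro: trep2_add simp: algebra_simps)

lemma teq2_fscale: "teq2 sM sN M N Bal f g \<Longrightarrow> teq2 sM sN M N Bal (fscale r f) (fscale r g)"
  unfolding teq2_def using fspan_scale[of "f - g" _ r]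
  by (auto intro: trep2_fscale simp: fscale_diff)

lemma teq2_tsum:
  assumes "finite (fsupp f)" "\<And>p. p \<in> fsupp f \<Longrightarrow> teq2 sM sN M N Bal (X p) (Y p)"
  shows "teq2 sM sN M N Bal (tsum fscale f X) (tsum fscale f Y :: _ \<Rightarrow> 'k::comm_ring_1)"
  unfolding teq2_def
proof (intro conjI)
  show "trep2 M N (tsum fscale f X)" "trep2 M N (tsum fscale f Y)"
    using assms by (auto intro!: trep2_tsum simp: teq2_def)
  have "tsum fscale f (\<lambda>p. X p - Y p) \<in> fspan (rels2 sM sN M N Bal)"
    by (rule tsum_in_subspace[OF module_fscale subspace_fspan]) (use assms in \<open>auto simp: teq2_def\<close>)
  then show "tsum fscale f X - tsum fscale f Y \<in> fspan (rels2 sM sN M N Bal)"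
    by (simp add: tsum_diff_right[OF module_fscale])
qed

lemma rels2_add_left:
  "m \<in> M \<Longrightarrow> m' \<in> M \<Longrightarrow> n \<in> N \<Longrightarrow> sing (m + m', n) - sing (m, n) - sing (m', n) \<in> rels2 sM sN M N Bal"
  unfolding rels2_def by blast

lemma rels2_add_right:
  "m \<in> M \<Longrightarrow> n \<in> N \<Longrightarrow> n' \<in> N \<Longrightarrow> sing (m, n + n') - sing (m, n) - sing (m, n') \<in> rels2 sM sN M N Bal"
  unfolding rels2_def by blast

lemma rels2_scale_left:
  "m \<in> M \<Longrightarrow> n \<in> N \<Longrightarrow> sing (sM r m, n) - fscale r (sing (m, n)) \<in> rels2 sM sN M N Bal"
  unfolding rels2_def by blast

lemma rels2_scale_right:
  "m \<in> M \<Longrightarrow> n \<in> N \<Longrightarrow> sing (m, sN r n) - fscale r (sing (m, n)) \<in> rels2 sM sN M N Bal"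
  unfolding rels2_def by blast

lemma teq2_sing_add_right:
  "m \<in> M \<Longrightarrow> n \<in> N \<Longrightarrow> n' \<in> N \<Longrightarrow> n + n' \<in> N \<Longrightarrow>
    teq2 sM sN M N Bal (sing (m, n + n')) (sing (m, n) + sing (m, n') :: _ \<Rightarrow> 'k::comm_ring_1)"
  unfolding teq2_def
  by (auto intro!: trep2_add trep2_sing fspan_base simp: rels2_def diff_add_eq_diff_diff_swap)

lemma teq2_sing_scale_right:
  "m \<in> M \<Longrightarrow> n \<in> N \<Longrightarrow> sN r n \<in> N \<Longrightarrow>
    teq2 sM sN M N Bal (sing (m, sN r n)) (fscale r (sing (m, n)) :: _ \<Rightarrow> 'k::comm_ring_1)"
  unfolding teq2_def by (auto intro!: trep2_fscale trep2_sing fspan_base rels2_scale_right)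

lemma tsum_sing_diff_diff:
  "module s \<Longrightarrow> tsum s (sing a - sing b - sing c :: _ \<Rightarrow> 'k::comm_ring_1) F = F a - F b - F c"
  by (simp add: tsum_diff finite_fsupp_diff finite_fsupp_sing tsum_sing)

lemma tsum_sing_diff_fscale:
  "module s \<Longrightarrow> tsum s (sing a - fscale r (sing b) :: _ \<Rightarrow> 'k::comm_ring_1) F = F a - s r (F b)"
  by (simp add: tsum_diff finite_fsupp_fscale finite_fsupp_sing tsum_sing tsum_fscale)

lemma tsum_sing_diff: "module s \<Longrightarrow> tsum s (sing a - sing b :: _ \<Rightarrow> 'k::comm_ring_1) F = F a - F b"
  by (simp add: tsum_diff finite_fsupp_sing tsum_sing)

lemma fspan_tsum_in_subspace:
  assumes "module s" "module.subspace s V" "f \<in> fspan R"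
    "\<And>r. r \<in> R \<Longrightarrow> finite (fsupp r) \<and> tsum s r F \<in> V"
  shows "finite (fsupp (f :: _ \<Rightarrow> 'k::comm_ring_1)) \<and> tsum s f F \<in> V"
proof -
  interpret fs: module "fscale :: 'k \<Rightarrow> _" by (rule module_fscale)
  let ?S = "{f. finite (fsupp f) \<and> tsum s f F \<in> V}"
  have "fs.subspace ?S"
  proof (rule fs.subspaceI)
    show "0 \<in> ?S" using module.subspace_0[OF assms(1,2)] by simp
  next
    fix f g assume f: "f \<in> ?S" and g: "g \<in> ?S"
    have "finite (fsupp (f + g))"
      by (rule finite_subset[OF fsupp_add]) (use f g in blast)
    moreover have "tsum s (f + g) F \<in> V"
      using f g by (simp add: tsum_add[OF assms(1)] module.subspace_add[OF assms(1,2)])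
    ultimately show "f + g \<in> ?S" by blast
  next
    fix c f assume f: "f \<in> ?S"
    then show "fscale c f \<in> ?S"
      by (simp add: tsum_fscale[OF assms(1)] module.subspace_scale[OF assms(1,2)] finite_fsupp_fscale)
  qed
  with assms(3) have "f \<in> ?S"
    unfolding fspan_def by (rule fs.span_subspace_induct) (use assms(4) in blast)
  then show ?thesis by simp
qed

definition respects_rels2 ::
  "('k \<Rightarrow> 'v::ab_group_add \<Rightarrow> 'v) \<Rightarrow> ('k \<Rightarrow> 'a::ab_group_add \<Rightarrow> 'a) \<Rightarrow> ('k \<Rightarrow> 'b::ab_group_add \<Rightarrow> 'b)
    \<Rightarrow> 'a set \<Rightarrow> 'b set \<Rightarrow> (('a \<times> 'b) \<times> ('a \<times> 'b)) set \<Rightarrow> 'v set \<Rightarrow> ('a \<times> 'b \<Rightarrow> 'v) \<Rightarrow> bool"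
  where "respects_rels2 s sM sN M N Bal V F \<longleftrightarrow>
     (\<forall>m\<in>M. \<forall>m'\<in>M. \<forall>n\<in>N. F (m + m', n) - F (m, n) - F (m', n) \<in> V)
   \<and> (\<forall>m\<in>M. \<forall>n\<in>N. \<forall>n'\<in>N. F (m, n + n') - F (m, n) - F (m, n') \<in> V)
   \<and> (\<forall>r. \<forall>m\<in>M. \<forall>n\<in>N. F (sM r m, n) - s r (F (m, n)) \<in> V)
   \<and> (\<forall>r. \<forall>m\<in>M. \<forall>n\<in>N. F (m, sN r n) - s r (F (m, n)) \<in> V)
   \<and> (\<forall>p q. (p, q) \<in> Bal \<longrightarrow> F p - F q \<in> V)"

lemma teq2_tsum_diff_in:
  assumes "module s" "module.subspace s V" "teq2 sM sN M N Bal f g" "respects_rels2 s sM sN M N Bal V F"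
  shows "tsum s f F - tsum s (g :: _ \<Rightarrow> 'k::comm_ring_1) F \<in> V"
proof -
  have "f - g \<in> fspan (rels2 sM sN M N Bal)"
    using assms(3) by (simp add: teq2_def)
  then have "finite (fsupp (f - g)) \<and> tsum s (f - g) F \<in> V"
  proof (rule fspan_tsum_in_subspace[OF assms(1,2)])
    fix r assume "r \<in> rels2 sM sN M N Bal"
    then show "finite (fsupp r) \<and> tsum s r F \<in> V"
      unfolding rels2_def
      by (elim UnE CollectE exE conjE; simp only: tsum_sing_diff_diff[OF assms(1)]
          tsum_sing_diff_fscale[OF assms(1)] tsum_sing_diff[OF assms(1)]
          finite_fsupp_diff finite_fsupp_fscale finite_fsupp_sing)
         (use assms(4) in \<open>auto simp: respects_rels2_def\<close>)
  qed
  then show ?thesis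
    using assms(3) by (simp add: tsum_diff[OF assms(1)] teq2_def trep2_def)
qed

lemma respects_rels2_zeroI:
  fixes F :: "'a::ab_group_add \<times> 'b::ab_group_add \<Rightarrow> 'v::ab_group_add"
  assumes "\<And>m m' n. m \<in> M \<Longrightarrow> m' \<in> M \<Longrightarrow> n \<in> N \<Longrightarrow> F (m + m', n) = F (m, n) + F (m', n)"
    "\<And>m n n'. m \<in> M \<Longrightarrow> n \<in> N \<Longrightarrow> n' \<in> N \<Longrightarrow> F (m, n + n') = F (m, n) + F (m, n')"
    "\<And>r m n. m \<in> M \<Longrightarrow> n \<in> N \<Longrightarrow> F (sM r m, n) = s r (F (m, n))"
    "\<And>r m n. m \<in> M \<Longrightarrow> n \<in> N \<Longrightarrow> F (m, sN r n) = s r (F (m, n))"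
    "\<And>p q. (p, q) \<in> Bal \<Longrightarrow> F p = F q"
  shows "respects_rels2 s sM sN M N Bal {0} F"
  using assms unfolding respects_rels2_def by auto

lemma teq2_tsum_eq:
  assumes "module s" "teq2 sM sN M N Bal f g" "respects_rels2 s sM sN M N Bal {0} F"
  shows "tsum s f F = tsum s (g :: _ \<Rightarrow> 'k::comm_ring_1) F"
  using teq2_tsum_diff_in[OF assms(1) module.subspace_single_0[OF assms(1)] assms(2,3)] by simp

definition bilinear_on ::
  "('k \<Rightarrow> 'v::ab_group_add \<Rightarrow> 'v) \<Rightarrow> ('k \<Rightarrow> 'a::ab_group_add \<Rightarrow> 'a) \<Rightarrow> ('k \<Rightarrow> 'b::ab_group_add \<Rightarrow> 'b)
    \<Rightarrow> 'a set \<Rightarrow> 'b set \<Rightarrow> ('a \<times> 'b \<Rightarrow> 'v) \<Rightarrow> bool"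
  where "bilinear_on s sM sN M N F \<longleftrightarrow>
     (\<forall>m\<in>M. \<forall>m'\<in>M. \<forall>n\<in>N. F (m + m', n) = F (m, n) + F (m', n))
   \<and> (\<forall>m\<in>M. \<forall>n\<in>N. \<forall>n'\<in>N. F (m, n + n') = F (m, n) + F (m, n'))
   \<and> (\<forall>r. \<forall>m\<in>M. \<forall>n\<in>N. F (sM r m, n) = s r (F (m, n)))
   \<and> (\<forall>r. \<forall>m\<in>M. \<forall>n\<in>N. F (m, sN r n) = s r (F (m, n)))"

lemma bilinear_onI:
  assumes "\<And>m m' n. m \<in> M \<Longrightarrow> m' \<in> M \<Longrightarrow> n \<in> N \<Longrightarrow> F (m + m', n) = F (m, n) + F (m', n)"
    "\<And>m n n'. m \<in> M \<Longrightarrow> n \<in> N \<Longrightarrow> n' \<in> N \<Longrightarrow> F (m, n + n') = F (m, n) + F (m, n')"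
    "\<And>r m n. m \<in> M \<Longrightarrow> n \<in> N \<Longrightarrow> F (sM r m, n) = s r (F (m, n))"
    "\<And>r m n. m \<in> M \<Longrightarrow> n \<in> N \<Longrightarrow> F (m, sN r n) = s r (F (m, n))"
  shows "bilinear_on s sM sN M N F"
  using assms unfolding bilinear_on_def by blast

lemma teq2_tsum_eq_bilinear:
  fixes F :: "'a::ab_group_add \<times> 'b::ab_group_add \<Rightarrow> 'v::ab_group_add"
  assumes "module s" "teq2 sM sN M N {} f g" "bilinear_on s sM sN M N F"
  shows "tsum s f F = tsum s (g :: _ \<Rightarrow> 'k::comm_ring_1) F"
  using assms(3) unfolding bilinear_on_def
  by (intro teq2_tsum_eq[OF assms(1,2)] respects_rels2_zeroI) auto

lemma bilinear_on_tsum: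
  assumes "module s" "\<And>p. p \<in> fsupp f \<Longrightarrow> bilinear_on s sM sN M N (\<Phi> p)"
  shows "bilinear_on s sM sN M N (\<lambda>c. tsum s f (\<lambda>p. \<Phi> p c))"
  using assms(2)
  by (intro bilinear_onI)
     (auto simp: bilinear_on_def tsum_add_right[OF assms(1), symmetric]
        tsum_scale_right[OF assms(1), symmetric] intro!: tsum_cong)

lemma bilinear_on_compose:
  assumes "bilinear_on s sM' sN' M' N' F" "linear_on sM sM' M M' \<alpha>" "linear_on sN sN' N N' \<beta>"
  shows "bilinear_on s sM sN M N (\<lambda>c. F (\<alpha> (fst c), \<beta> (snd c)))"
  using assms unfolding bilinear_on_def linear_on_def by (simp add: Ball_def)

definition trilinear_on ::
  "('k \<Rightarrow> 'v::ab_group_add \<Rightarrow> 'v) \<Rightarrow> ('k \<Rightarrow> 'a::ab_group_add \<Rightarrow> 'a) \<Rightarrow> ('k \<Rightarrow> 'b::ab_group_add \<Rightarrow> 'b)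
    \<Rightarrow> ('k \<Rightarrow> 'c::ab_group_add \<Rightarrow> 'c) \<Rightarrow> 'a set \<Rightarrow> 'b set \<Rightarrow> 'c set \<Rightarrow> ('a \<times> 'b \<times> 'c \<Rightarrow> 'v) \<Rightarrow> bool"
  where "trilinear_on s sM sN sP M N P F \<longleftrightarrow>
     (\<forall>m\<in>M. \<forall>m'\<in>M. \<forall>n\<in>N. \<forall>p\<in>P. F (m + m', n, p) = F (m, n, p) + F (m', n, p))
   \<and> (\<forall>m\<in>M. \<forall>n\<in>N. \<forall>n'\<in>N. \<forall>p\<in>P. F (m, n + n', p) = F (m, n, p) + F (m, n', p))
   \<and> (\<forall>m\<in>M. \<forall>n\<in>N. \<forall>p\<in>P. \<forall>p'\<in>P. F (m, n, p + p') = F (m, n, p) + F (m, n, p'))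
   \<and> (\<forall>r. \<forall>m\<in>M. \<forall>n\<in>N. \<forall>p\<in>P. F (sM r m, n, p) = s r (F (m, n, p)))
   \<and> (\<forall>r. \<forall>m\<in>M. \<forall>n\<in>N. \<forall>p\<in>P. F (m, sN r n, p) = s r (F (m, n, p)))
   \<and> (\<forall>r. \<forall>m\<in>M. \<forall>n\<in>N. \<forall>p\<in>P. F (m, n, sP r p) = s r (F (m, n, p)))"

lemma teq3_tsum_eq:
  fixes F :: "'a::ab_group_add \<times> 'b::ab_group_add \<times> 'c::ab_group_add \<Rightarrow> 'v::ab_group_add"
  assumes "module s" "teq3 sM sN sP M N P f g" "trilinear_on s sM sN sP M N P F"
  shows "tsum s f F = tsum s (g :: _ \<Rightarrow> 'k::comm_ring_1) F"
proof -
  have "f - g \<in> fspan (rels3 sM sN sP M N P)"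
    using assms(2) by (simp add: teq3_def)
  then have "finite (fsupp (f - g)) \<and> tsum s (f - g) F \<in> {0}"
  proof (rule fspan_tsum_in_subspace[OF assms(1) module.subspace_single_0[OF assms(1)]])
    fix r assume "r \<in> rels3 sM sN sP M N P"
    then show "finite (fsupp r) \<and> tsum s r F \<in> {0}"
      unfolding rels3_def
      by (elim UnE CollectE exE conjE; simp only: tsum_sing_diff_diff[OF assms(1)]
          tsum_sing_diff_fscale[OF assms(1)] finite_fsupp_diff finite_fsupp_fscale finite_fsupp_sing)
         (use assms(3) in \<open>auto simp: trilinear_on_def\<close>)
  qed
  then show ?thesis
    using assms(2) by (simp add: tsum_diff[OF assms(1)] teq3_def trep3_def)
qed

lemma tsum_tl3:
  assumes "module s" "finite (fsupp t)"
  shows "tsum s (tl3 t c :: _ \<Rightarrow> 'k::comm_ring_1) F = tsum s t (\<lambda>(a, b). F (a, b, c))"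
proof -
  let ?e = "\<lambda>(a, b). (a, b, c)"
  have "tsum s (tl3 t c) F = (\<Sum>q\<in>?e ` fsupp t. s (tl3 t c q) (F q))"
    by (rule tsum_eq_sum_superset) (use assms in \<open>auto simp: fsupp_def tl3_def split: if_splits\<close>)
  also have "\<dots> = tsum s t (\<lambda>(a, b). F (a, b, c))"
    by (subst sum.reindex) (auto simp: inj_on_def tsum_def tl3_def intro!: sum.cong)
  finally show ?thesis .
qed

lemma tsum_tr3:
  assumes "module s" "finite (fsupp t)"
  shows "tsum s (tr3 a t :: _ \<Rightarrow> 'k::comm_ring_1) F = tsum s t (\<lambda>(b, c). F (a, b, c))"
proof -
  let ?e = "\<lambda>(b, c). (a, b, c)"
  have "tsum s (tr3 a t) F = (\<Sum>q\<in>?e ` fsupp t. s (tr3 a t q) (F q))"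
    by (rule tsum_eq_sum_superset) (use assms in \<open>auto simp: fsupp_def tr3_def split: if_splits\<close>)
  also have "\<dots> = tsum s t (\<lambda>(b, c). F (a, b, c))"
    by (subst sum.reindex) (auto simp: inj_on_def tsum_def tr3_def intro!: sum.cong)
  finally show ?thesis .
qed

lemma finite_fsupp_tl3: "finite (fsupp t) \<Longrightarrow> finite (fsupp (tl3 t c :: _ \<Rightarrow> 'k::comm_ring_1))"
  by (rule finite_subset[of _ "(\<lambda>(a, b). (a, b, c)) ` fsupp t"])
     (auto simp: fsupp_def tl3_def split: if_splits)

lemma finite_fsupp_tr3: "finite (fsupp t) \<Longrightarrow> finite (fsupp (tr3 a t :: _ \<Rightarrow> 'k::comm_ring_1))"
  by (rule finite_subset[of _ "(\<lambda>(b, c). (a, b, c)) ` fsupp t"])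
     (auto simp: fsupp_def tr3_def split: if_splits)

definition map_left :: "('a \<Rightarrow> 'c) \<Rightarrow> ('a \<times> 'b \<Rightarrow> 'k::comm_ring_1) \<Rightarrow> 'c \<times> 'b \<Rightarrow> 'k"
  where "map_left L f = tsum fscale f (\<lambda>q. sing (L (fst q), snd q))"

lemma map_left_sing: "map_left L (sing (a, b)) = sing (L a, b)"
  by (simp add: map_left_def tsum_sing[OF module_fscale])

lemma map_left_cong: "(\<And>q. q \<in> fsupp f \<Longrightarrow> L (fst q) = L' (fst q)) \<Longrightarrow> map_left L f = map_left L' f"
  unfolding map_left_def by (auto intro: tsum_cong)

lemma map_left_id: "finite (fsupp f) \<Longrightarrow> map_left (\<lambda>a. a) f = f"
  by (simp add: map_left_def tsum_fscale_sing)

lemma finite_fsupp_map_left: "finite (fsupp f) \<Longrightarrow> finite (fsupp (map_left L f))"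
  unfolding map_left_def by (rule finite_fsupp_tsum_fscale) (simp_all add: finite_fsupp_sing)

lemma trep2_map_left:
  assumes "trep2 M N f" "\<And>m. m \<in> M \<Longrightarrow> L m \<in> M'"
  shows "trep2 M' N (map_left L f)"
  unfolding map_left_def
proof (rule trep2_tsum)
  show "finite (fsupp f)" using assms(1) by (simp add: trep2_def)
  fix q assume "q \<in> fsupp f"
  then show "trep2 M' N (sing (L (fst q), snd q))"
    by (intro trep2_sing) (use assms in \<open>auto simp: trep2_def\<close>)
qed

lemma tsum_map_left:
  assumes "module s" "finite (fsupp f)"
  shows "tsum s (map_left L f) F = tsum s f (\<lambda>q. F (L (fst q), snd q))"
  unfolding map_left_def using assms by (simp add: tsum_tsum finite_fsupp_sing tsum_sing)

lemma teq2_map_left: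
  fixes L :: "'a::ab_group_add \<Rightarrow> 'c::ab_group_add" and f g :: "'a \<times> 'b::ab_group_add \<Rightarrow> 'k::comm_ring_1"
  assumes L: "linear_on sM sM' M M' L" and fg: "teq2 sM sN M N {} f g"
  shows "teq2 sM' sN M' N {} (map_left L f) (map_left L g)"
proof -
  have LM: "L m \<in> M'" if "m \<in> M" for m
    using L that by (simp add: linear_on_def)
  have "respects_rels2 fscale sM sN M N {} (fspan (rels2 sM' sN M' N {}))
          (\<lambda>c. sing (L (fst c), snd c) :: 'c \<times> 'b \<Rightarrow> 'k)"
    using L unfolding respects_rels2_def linear_on_def
    by (auto intro!: fspan_base rels2_add_left rels2_add_right rels2_scale_left rels2_scale_right)
  then have "map_left L f - map_left L g \<in> fspan (rels2 sM' sN M' N {})"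
    unfolding map_left_def by (rule teq2_tsum_diff_in[OF module_fscale subspace_fspan fg])
  with fg LM show ?thesis
    by (auto simp: teq2_def intro: trep2_map_left)
qed

lemma map_left_tsum:
  assumes "finite (fsupp f)" "\<And>p. p \<in> fsupp f \<Longrightarrow> finite (fsupp (G p))"
  shows "map_left L (tsum fscale f G) = tsum fscale f (\<lambda>p. map_left L (G p))"
  unfolding map_left_def by (rule tsum_tsum[OF module_fscale assms])

lemma map_left_map_left:
  assumes "finite (fsupp f)"
  shows "map_left L (map_left L' f) = map_left (\<lambda>a. L (L' a)) f"
proof -
  have "map_left L (map_left L' f) = tsum fscale (map_left L' f) (\<lambda>q. sing (L (fst q), snd q))"
    by (simp only: map_left_def[of L])
  also have "\<dots> = map_left (\<lambda>a. L (L' a)) f"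
    by (simp add: tsum_map_left[OF module_fscale assms] map_left_def[of "\<lambda>a. L (L' a)"])
  finally show ?thesis .
qed

lemma khom_closed: "g \<in> khom s s' M N \<Longrightarrow> m \<in> M \<Longrightarrow> g m \<in> N"
  unfolding khom_def by blast

lemma khom_add: "g \<in> khom s s' M N \<Longrightarrow> m \<in> M \<Longrightarrow> m' \<in> M \<Longrightarrow> g (m + m') = g m + g m'"
  unfolding khom_def by blast

lemma khom_scale: "g \<in> khom s s' M N \<Longrightarrow> m \<in> M \<Longrightarrow> g (s r m) = s' r (g m)"
  unfolding khom_def by blast

lemma khom_outside: "g \<in> khom s s' M N \<Longrightarrow> m \<notin> M \<Longrightarrow> g m = 0"
  unfolding khom_def by blast

lemma bhom_khom: "\<phi> \<in> bhom sH H uH sA A mA rho x z y \<Longrightarrow> \<phi> \<in> khom sA sA (A x z) (A x y)"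
  by (simp add: bhom_def)

lemma bhom_B_linear: "\<phi> \<in> bhom sH H uH sA A mA rho x z y \<Longrightarrow> b \<in> coinv sH H uH sA A rho x \<Longrightarrow>
    a \<in> A x z \<Longrightarrow> \<phi> (mA x x z b a) = mA x x y b (\<phi> a)"
  by (simp add: bhom_def)

lemma bhom_closed: "\<phi> \<in> bhom sH H uH sA A mA rho x z y \<Longrightarrow> a \<in> A x z \<Longrightarrow> \<phi> a \<in> A x y"
  by (simp add: bhom_def khom_def)

locale galois_category_ext =
  fixes sH :: "'k::comm_ring_1 \<Rightarrow> 'h::ab_group_add \<Rightarrow> 'h"
    and H :: "'x \<Rightarrow> 'x \<Rightarrow> 'h set"
    and mH :: "'x \<Rightarrow> 'x \<Rightarrow> 'x \<Rightarrow> 'h \<Rightarrow> 'h \<Rightarrow> 'h" and uH :: "'x \<Rightarrow> 'h"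
    and DH :: "'x \<Rightarrow> 'x \<Rightarrow> 'h \<Rightarrow> 'h \<times> 'h \<Rightarrow> 'k" and eH :: "'x \<Rightarrow> 'x \<Rightarrow> 'h \<Rightarrow> 'k"
    and sA :: "'k \<Rightarrow> 'a::ab_group_add \<Rightarrow> 'a"
    and A :: "'x \<Rightarrow> 'x \<Rightarrow> 'a set"
    and mA :: "'x \<Rightarrow> 'x \<Rightarrow> 'x \<Rightarrow> 'a \<Rightarrow> 'a \<Rightarrow> 'a" and uA :: "'x \<Rightarrow> 'a"
    and rho :: "'x \<Rightarrow> 'x \<Rightarrow> 'a \<Rightarrow> 'a \<times> 'h \<Rightarrow> 'k"
  assumes semi_hopf: "semi_hopf_cat sH H mH uH DH eH"
    and comodule: "comodule_cat sH H mH uH DH eH sA A mA uA rho"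
    and galois: "galois_ext sH H uH sA A mA rho"
begin

abbreviation "B \<equiv> coinv sH H uH sA A rho"

lemma klin_cat_A: "klin_cat sA A mA uA"
  using comodule by (simp add: comodule_cat_def)

lemma klin_cat_H: "klin_cat sH H mH uH"
  using semi_hopf by (simp add: semi_hopf_cat_def)

lemma module_sA: "module sA"
  using klin_cat_A by (simp add: klin_cat_def)

lemma module_sH: "module sH"
  using klin_cat_H by (simp add: klin_cat_def)

lemma subspace_A: "module.subspace sA (A x y)"
  using klin_cat_A by (simp add: klin_cat_def)

lemma subspace_H: "module.subspace sH (H x y)"
  using klin_cat_H by (simp add: klin_cat_def)

lemma A_zero: "0 \<in> A x y"
  by (rule module.subspace_0[OF module_sA subspace_A])

lemma A_add: "a \<in> A x y \<Longrightarrow> b \<in> A x y \<Longrightarrow> a + b \<in> A x y"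
  by (rule module.subspace_add[OF module_sA subspace_A])

lemma A_scale: "a \<in> A x y \<Longrightarrow> sA r a \<in> A x y"
  by (rule module.subspace_scale[OF module_sA subspace_A])

lemma H_add: "h \<in> H x y \<Longrightarrow> h' \<in> H x y \<Longrightarrow> h + h' \<in> H x y"
  by (rule module.subspace_add[OF module_sH subspace_H])

lemma H_scale: "h \<in> H x y \<Longrightarrow> sH r h \<in> H x y"
  by (rule module.subspace_scale[OF module_sH subspace_H])

lemma mA_closed: "a \<in> A x y \<Longrightarrow> b \<in> A y z \<Longrightarrow> mA x y z a b \<in> A x z"
  using klin_cat_A by (simp add: klin_cat_def)

lemma mA_add_left:
  "a \<in> A x y \<Longrightarrow> a' \<in> A x y \<Longrightarrow> b \<in> A y z \<Longrightarrow> mA x y z (a + a') b = mA x y z a b + mA x y z a' b"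
  using klin_cat_A by (simp add: klin_cat_def)

lemma mA_add_right:
  "a \<in> A x y \<Longrightarrow> b \<in> A y z \<Longrightarrow> b' \<in> A y z \<Longrightarrow> mA x y z a (b + b') = mA x y z a b + mA x y z a b'"
  using klin_cat_A by (simp add: klin_cat_def)

lemma mA_scale_left: "a \<in> A x y \<Longrightarrow> b \<in> A y z \<Longrightarrow> mA x y z (sA r a) b = sA r (mA x y z a b)"
  using klin_cat_A by (simp add: klin_cat_def)

lemma mA_scale_right: "a \<in> A x y \<Longrightarrow> b \<in> A y z \<Longrightarrow> mA x y z a (sA r b) = sA r (mA x y z a b)"
  using klin_cat_A by (simp add: klin_cat_def)

lemma mA_assoc:
  "a \<in> A x y \<Longrightarrow> b \<in> A y z \<Longrightarrow> c \<in> A z w \<Longrightarrow> mA x y w a (mA y z w b c) = mA x z w (mA x y z a b) c"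
  using klin_cat_A by (simp add: klin_cat_def)

lemma uA_closed: "uA x \<in> A x x"
  using klin_cat_A by (simp add: klin_cat_def)

lemma mA_unit_left: "a \<in> A x y \<Longrightarrow> mA x x y (uA x) a = a"
  using klin_cat_A by (simp add: klin_cat_def)

lemma mA_unit_right: "a \<in> A x y \<Longrightarrow> mA x y y a (uA y) = a"
  using klin_cat_A by (simp add: klin_cat_def)

lemma mH_closed: "h \<in> H x y \<Longrightarrow> h' \<in> H y z \<Longrightarrow> mH x y z h h' \<in> H x z"
  using klin_cat_H by (simp add: klin_cat_def)

lemma mH_add_left:
  "h \<in> H x y \<Longrightarrow> h' \<in> H x y \<Longrightarrow> k \<in> H y z \<Longrightarrow> mH x y z (h + h') k = mH x y z h k + mH x y z h' k"
  using klin_cat_H by (simp add: klin_cat_def)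

lemma mH_add_right:
  "h \<in> H x y \<Longrightarrow> k \<in> H y z \<Longrightarrow> k' \<in> H y z \<Longrightarrow> mH x y z h (k + k') = mH x y z h k + mH x y z h k'"
  using klin_cat_H by (simp add: klin_cat_def)

lemma mH_scale_left: "h \<in> H x y \<Longrightarrow> k \<in> H y z \<Longrightarrow> mH x y z (sH r h) k = sH r (mH x y z h k)"
  using klin_cat_H by (simp add: klin_cat_def)

lemma mH_scale_right: "h \<in> H x y \<Longrightarrow> k \<in> H y z \<Longrightarrow> mH x y z h (sH r k) = sH r (mH x y z h k)"
  using klin_cat_H by (simp add: klin_cat_def)

lemma mH_unit_left: "h \<in> H x y \<Longrightarrow> mH x x y (uH x) h = h"
  using klin_cat_H by (simp add: klin_cat_def)

lemma linear_on_mA_right: "b \<in> A y z \<Longrightarrow> linear_on sA sA (A x y) (A x z) (\<lambda>a. mA x y z a b)"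
  unfolding linear_on_def by (simp add: mA_closed mA_add_left mA_scale_left)

lemma linear_on_mA_left: "a \<in> A x y \<Longrightarrow> linear_on sA sA (A y z) (A x z) (mA x y z a)"
  unfolding linear_on_def by (simp add: mA_closed mA_add_right mA_scale_right)

lemma linear_on_mH_right: "k \<in> H y z \<Longrightarrow> linear_on sH sH (H x y) (H x z) (\<lambda>h. mH x y z h k)"
  unfolding linear_on_def by (simp add: mH_closed mH_add_left mH_scale_left)

lemma kcomod_rho: "kcomod sH (H x y) (DH x y) (eH x y) sA (A x y) (rho x y)"
  using comodule by (simp add: comodule_cat_def)

lemma trep2_rho: "a \<in> A x y \<Longrightarrow> trep2 (A x y) (H x y) (rho x y a)"
  using kcomod_rho by (simp add: kcomod_def)

lemma finite_fsupp_rho: "a \<in> A x y \<Longrightarrow> finite (fsupp (rho x y a))"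
  using trep2_rho by (simp add: trep2_def)

lemma fsupp_rho: "a \<in> A x y \<Longrightarrow> p \<in> fsupp (rho x y a) \<Longrightarrow> fst p \<in> A x y \<and> snd p \<in> H x y"
  using trep2_rho[of a x y] by (auto simp: trep2_def)

lemma rho_add:
  "a \<in> A x y \<Longrightarrow> a' \<in> A x y \<Longrightarrow> teq2 sA sH (A x y) (H x y) {} (rho x y (a + a')) (rho x y a + rho x y a')"
  using kcomod_rho by (simp add: kcomod_def)

lemma rho_scale: "a \<in> A x y \<Longrightarrow> teq2 sA sH (A x y) (H x y) {} (rho x y (sA r a)) (fscale r (rho x y a))"
  using kcomod_rho by (simp add: kcomod_def)

lemma rho_coassoc: "a \<in> A x y \<Longrightarrow> teq3 sA sH sH (A x y) (H x y) (H x y)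
   (tsum fscale (rho x y a) (\<lambda>p. tl3 (rho x y (fst p)) (snd p)))
   (tsum fscale (rho x y a) (\<lambda>p. tr3 (fst p) (DH x y (snd p))))"
  using kcomod_rho by (simp add: kcomod_def)

lemma rho_counit: "a \<in> A x y \<Longrightarrow> tsum sA (rho x y a) (\<lambda>p. sA (eH x y (snd p)) (fst p)) = a"
  using kcomod_rho by (simp add: kcomod_def)

lemma rho_mult: "a \<in> A x y \<Longrightarrow> b \<in> A y z \<Longrightarrow>
   teq2 sA sH (A x z) (H x z) {} (rho x z (mA x y z a b))
     (tsum fscale (rho x y a) (\<lambda>p. tsum fscale (rho y z b)
        (\<lambda>q. sing (mA x y z (fst p) (fst q), mH x y z (snd p) (snd q)))))"
  using comodule by (simp add: comodule_cat_def)

lemma trep2_DH: "h \<in> H x y \<Longrightarrow> trep2 (H x y) (H x y) (DH x y h)"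
  using semi_hopf by (simp add: semi_hopf_cat_def kcoalg_def)

lemma finite_fsupp_DH: "h \<in> H x y \<Longrightarrow> finite (fsupp (DH x y h))"
  using trep2_DH by (simp add: trep2_def)

lemma fsupp_DH: "h \<in> H x y \<Longrightarrow> p \<in> fsupp (DH x y h) \<Longrightarrow> fst p \<in> H x y \<and> snd p \<in> H x y"
  using trep2_DH[of h x y] by (auto simp: trep2_def)

lemma can_injective:
  "trep2 (A z x) (A x y) f \<Longrightarrow> trep2 (A z x) (A x y) g
    \<Longrightarrow> teq2 sA sH (A z y) (H x y) {} (can mA rho z x y f) (can mA rho z x y g)
    \<Longrightarrow> teq2 sA sA (A z x) (A x y) (balB A mA (B x) z x y) f g"
  using galois unfolding galois_ext_def by blast

lemma can_surjective:
  "trep2 (A z y) (H x y) t \<Longrightarrow>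
    \<exists>f. trep2 (A z x) (A x y) f \<and> teq2 sA sH (A z y) (H x y) {} (can mA rho z x y f) t"
  using galois unfolding galois_ext_def by blast

lemma tsum_in_A: "(\<And>p. p \<in> fsupp f \<Longrightarrow> G p \<in> A x y) \<Longrightarrow> tsum sA f G \<in> A x y"
  by (rule tsum_in_subspace[OF module_sA subspace_A])

lemma mA_tsum_right:
  assumes "a \<in> A x y" "\<And>p. p \<in> fsupp f \<Longrightarrow> G p \<in> A y z"
  shows "mA x y z a (tsum sA f G) = tsum sA f (\<lambda>p. mA x y z a (G p))"
  by (rule tsum_linear[OF module_sA subspace_A linear_on_mA_left[OF assms(1)] assms(2)])

lemma bilinear_on_mA_apply:
  assumes "g \<in> khom sH sA (H x z) (A z y)"
  shows "bilinear_on sA sA sH (A w z) (H x z) (\<lambda>p. mA w z y (fst p) (g (snd p)))"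
  using assms
  by (intro bilinear_onI) (simp_all add: mA_add_left mA_add_right mA_scale_left mA_scale_right
      khom_closed khom_add khom_scale H_add H_scale)

lemma tsum_rho_add:
  assumes "bilinear_on sA sA sH (A x y) (H x y) F" "a \<in> A x y" "a' \<in> A x y"
  shows "tsum sA (rho x y (a + a')) F = tsum sA (rho x y a) F + tsum sA (rho x y a') F"
  using teq2_tsum_eq_bilinear[OF module_sA rho_add[OF assms(2,3)] assms(1)]
  by (simp add: tsum_add[OF module_sA] finite_fsupp_rho assms)

lemma tsum_rho_scale:
  assumes "bilinear_on sA sA sH (A x y) (H x y) F" "a \<in> A x y"
  shows "tsum sA (rho x y (sA r a)) F = sA r (tsum sA (rho x y a) F)"
  using teq2_tsum_eq_bilinear[OF module_sA rho_scale[OF assms(2)] assms(1)]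
  by (simp add: tsum_fscale[OF module_sA] finite_fsupp_rho assms)

lemma tsum_rho_tsum:
  assumes "bilinear_on sA sA sH (A x y) (H x y) F" "\<And>p. p \<in> fsupp f \<Longrightarrow> G p \<in> A x y"
  shows "tsum sA (rho x y (tsum sA f G)) F = tsum sA f (\<lambda>p. tsum sA (rho x y (G p)) F)"
proof (rule tsum_linear[OF module_sA subspace_A _ assms(2)])
  show "linear_on sA sA (A x y) UNIV (\<lambda>a. tsum sA (rho x y a) F)"
    unfolding linear_on_def using tsum_rho_add[OF assms(1)] tsum_rho_scale[OF assms(1)] by blast
qed

lemma tsum_rho_zero:
  assumes "bilinear_on sA sA sH (A x y) (H x y) F"
  shows "tsum sA (rho x y 0) F = 0"
  using tsum_rho_add[OF assms A_zero A_zero] by simp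

lemma tsum_rho_mult:
  assumes "a \<in> A x y" "b \<in> A y z" "bilinear_on sA sA sH (A x z) (H x z) F"
  shows "tsum sA (rho x z (mA x y z a b)) F = tsum sA (rho x y a)
    (\<lambda>p. tsum sA (rho y z b) (\<lambda>q. F (mA x y z (fst p) (fst q), mH x y z (snd p) (snd q))))"
proof -
  have "finite (fsupp (tsum fscale (rho y z b)
      (\<lambda>q. sing (mA x y z (fst p) (fst q), mH x y z (snd p) (snd q))) :: _ \<Rightarrow> 'k))" for p
    by (rule finite_fsupp_tsum_fscale) (simp_all add: finite_fsupp_rho assms finite_fsupp_sing)
  then show ?thesis
    unfolding teq2_tsum_eq_bilinear[OF module_sA rho_mult[OF assms(1,2)] assms(3)]
    by (simp add: tsum_tsum[OF module_sA] finite_fsupp_rho assms finite_fsupp_sing tsum_sing[OF module_sA])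
qed

section \<open>\<open>\<delta>\<close> takes values in \<open>B\<close>-linear maps\<close>

lemma delta_apply:
  "a \<in> A x z \<Longrightarrow> delta sA A mA rho x y z g a = tsum sA (rho x z a) (\<lambda>p. mA x z y (fst p) (g (snd p)))"
  by (simp add: delta_def)

lemma delta_outside: "a \<notin> A x z \<Longrightarrow> delta sA A mA rho x y z g a = 0"
  by (simp add: delta_def)

lemma delta_closed:
  assumes "g \<in> khom sH sA (H x z) (A z y)" "a \<in> A x z"
  shows "delta sA A mA rho x y z g a \<in> A x y"
  unfolding delta_apply[OF assms(2)]
  by (rule tsum_in_A) (use fsupp_rho[OF assms(2)] in \<open>blast intro: mA_closed khom_closed[OF assms(1)]\<close>)

lemma delta_khom:
  assumes "g \<in> khom sH sA (H x z) (A z y)"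
  shows "delta sA A mA rho x y z g \<in> khom sA sA (A x z) (A x y)"
  unfolding khom_def
  using delta_closed[OF assms] delta_outside
    tsum_rho_add[OF bilinear_on_mA_apply[OF assms]] tsum_rho_scale[OF bilinear_on_mA_apply[OF assms]]
  by (simp add: delta_apply A_add A_scale)

lemma coinvD: "b \<in> B x \<Longrightarrow> b \<in> A x x \<and> teq2 sA sH (A x x) (H x x) {} (rho x x b) (sing (b, uH x))"
  by (simp add: coinv_def)

lemma delta_B_linear:
  assumes g: "g \<in> khom sH sA (H x z) (A z y)" and b: "b \<in> B x" and a: "a \<in> A x z"
  shows "delta sA A mA rho x y z g (mA x x z b a) = mA x x y b (delta sA A mA rho x y z g a)"
proof -
  have bA: "b \<in> A x x" and bt: "teq2 sA sH (A x x) (H x x) {} (rho x x b) (sing (b, uH x))"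
    using coinvD[OF b] by auto
  let ?G = "\<lambda>c. tsum sA (rho x z a)
    (\<lambda>q. mA x z y (mA x x z (fst c) (fst q)) (g (mH x x z (snd c) (snd q))))"
  have bilG: "bilinear_on sA sA sH (A x x) (H x x) ?G"
    using bilinear_on_tsum[OF module_sA, of "rho x z a" sA sH "A x x" "H x x"
        "\<lambda>q c. mA x z y (mA x x z (fst c) (fst q)) (g (mH x x z (snd c) (snd q)))"]
      bilinear_on_compose[OF bilinear_on_mA_apply[OF g] linear_on_mA_right linear_on_mH_right]
      fsupp_rho[OF a]
    by simp
  have "delta sA A mA rho x y z g (mA x x z b a)
      = tsum sA (rho x z (mA x x z b a)) (\<lambda>p. mA x z y (fst p) (g (snd p)))"
    by (rule delta_apply[OF mA_closed[OF bA a]])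
  also have "\<dots> = tsum sA (rho x x b) ?G"
    by (simp add: tsum_rho_mult[OF bA a bilinear_on_mA_apply[OF g]])
  also have "\<dots> = tsum sA (sing (b, uH x)) ?G"
    by (rule teq2_tsum_eq_bilinear[OF module_sA bt bilG])
  also have "\<dots> = ?G (b, uH x)" by (rule tsum_sing[OF module_sA])
  also have "\<dots> = tsum sA (rho x z a) (\<lambda>q. mA x x y b (mA x z y (fst q) (g (snd q))))"
    using fsupp_rho[OF a] by (intro tsum_cong) (simp add: mH_unit_left mA_assoc bA khom_closed[OF g])
  also have "\<dots> = mA x x y b (delta sA A mA rho x y z g a)"
    unfolding delta_apply[OF a]
    by (rule mA_tsum_right[symmetric, OF bA])
       (use fsupp_rho[OF a] in \<open>blast intro: mA_closed khom_closed[OF g]\<close>)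
  finally show ?thesis .
qed

lemma delta_bhom:
  assumes "g \<in> khom sH sA (H x z) (A z y)"
  shows "delta sA A mA rho x y z g \<in> bhom sH H uH sA A mA rho x z y"
  unfolding bhom_def using delta_khom[OF assms] delta_B_linear[OF assms] by blast

lemma delta_kunit:
  "delta sA A mA rho x y y (kunit sA H eH uA x y) = (\<lambda>a. if a \<in> A x y then a else 0)"
proof
  fix a show "delta sA A mA rho x y y (kunit sA H eH uA x y) a = (if a \<in> A x y then a else 0)"
  proof (cases "a \<in> A x y")
    case True
    have "delta sA A mA rho x y y (kunit sA H eH uA x y) a
        = tsum sA (rho x y a) (\<lambda>p. sA (eH x y (snd p)) (fst p))"
      unfolding delta_apply[OF True] using fsupp_rho[OF True]
      by (intro tsum_cong) (simp add: kunit_def mA_scale_right mA_unit_right uA_closed)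
    then show ?thesis using rho_counit[OF True] True by simp
  qed (simp add: delta_outside)
qed

section \<open>Injectivity of \<open>\<delta>\<close>\<close>

lemma can_eq_map_left: "can mA rho z x y f = tsum fscale f (\<lambda>p. map_left (mA z x y (fst p)) (rho x y (snd p)))"
  by (simp add: can_def map_left_def)

lemma tsum_can:
  assumes "module s" "trep2 (A z x) (A x y) f"
  shows "tsum s (can mA rho z x y f) F
    = tsum s f (\<lambda>p. tsum s (rho x y (snd p)) (\<lambda>q. F (mA z x y (fst p) (fst q), snd q)))"
proof -
  have fin: "finite (fsupp f)" and sup: "\<And>p. p \<in> fsupp f \<Longrightarrow> snd p \<in> A x y"
    using assms(2) by (auto simp: trep2_def)
  show ?thesis
    unfolding can_eq_map_left using sup
    by (simp add: tsum_tsum[OF assms(1) fin] finite_fsupp_map_left finite_fsupp_rho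
        tsum_map_left[OF assms(1)] cong: tsum_cong_simp)
qed

text \<open>The representatives \<open>f\<close> of \<open>(can\<^sup>z\<^sub>x\<^sub>z)\<^sup>-\<^sup>1(1\<^sub>z \<otimes> h) = \<Sum>\<^sub>i l\<^sub>i(h) \<otimes>\<^sub>B r\<^sub>i(h)\<close>.\<close>

definition is_can_preimage :: "'x \<Rightarrow> 'x \<Rightarrow> 'h \<Rightarrow> ('a \<times> 'a \<Rightarrow> 'k) \<Rightarrow> bool"
  where "is_can_preimage x z h f \<longleftrightarrow>
    trep2 (A z x) (A x z) f \<and> teq2 sA sH (A z z) (H x z) {} (can mA rho z x z f) (sing (uA z, h))"

lemma delta_determines_apply:
  assumes g: "g \<in> khom sH sA (H x z) (A z y)" and h: "h \<in> H x z" and f: "is_can_preimage x z h f"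
  shows "g h = tsum sA f (\<lambda>p. mA z x y (fst p) (delta sA A mA rho x y z g (snd p)))"
proof -
  have c: "teq2 sA sH (A z z) (H x z) {} (can mA rho z x z f) (sing (uA z, h))"
    using f by (simp add: is_can_preimage_def)
  have sup: "\<And>p. p \<in> fsupp f \<Longrightarrow> fst p \<in> A z x \<and> snd p \<in> A x z"
    using f by (auto simp: is_can_preimage_def trep2_def)
  let ?F = "\<lambda>p. mA z z y (fst p) (g (snd p))"
  have "tsum sA f (\<lambda>p. mA z x y (fst p) (delta sA A mA rho x y z g (snd p)))
      = tsum sA f (\<lambda>p. tsum sA (rho x z (snd p)) (\<lambda>q. ?F (mA z x z (fst p) (fst q), snd q)))"
  proof (rule tsum_cong)
    fix p assume p: "p \<in> fsupp f"
    have "mA z x y (fst p) (delta sA A mA rho x y z g (snd p))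
        = tsum sA (rho x z (snd p)) (\<lambda>q. mA z x y (fst p) (mA x z y (fst q) (g (snd q))))"
      unfolding delta_apply[OF sup[OF p, THEN conjunct2]]
      by (rule mA_tsum_right) (use sup[OF p] fsupp_rho in \<open>blast intro: mA_closed khom_closed[OF g]\<close>)+
    also have "\<dots> = tsum sA (rho x z (snd p)) (\<lambda>q. ?F (mA z x z (fst p) (fst q), snd q))"
      using sup[OF p] fsupp_rho[OF sup[OF p, THEN conjunct2]]
      by (intro tsum_cong) (simp add: mA_assoc khom_closed[OF g])
    finally show "mA z x y (fst p) (delta sA A mA rho x y z g (snd p))
        = tsum sA (rho x z (snd p)) (\<lambda>q. ?F (mA z x z (fst p) (fst q), snd q))" .
  qed
  also have "\<dots> = tsum sA (can mA rho z x z f) ?F"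
    using f by (simp add: tsum_can[OF module_sA] is_can_preimage_def)
  also have "\<dots> = tsum sA (sing (uA z, h)) ?F"
    by (rule teq2_tsum_eq_bilinear[OF module_sA c bilinear_on_mA_apply[OF g]])
  also have "\<dots> = g h"
    by (simp add: tsum_sing[OF module_sA] mA_unit_left khom_closed[OF g h])
  finally show ?thesis by simp
qed

lemma can_preimage_exists: "h \<in> H x z \<Longrightarrow> \<exists>f. is_can_preimage x z h f"
  unfolding is_can_preimage_def by (rule can_surjective) (simp add: trep2_sing uA_closed)

lemma inj_on_delta: "inj_on (delta sA A mA rho x y z) (khom sH sA (H x z) (A z y))"
proof (rule inj_onI)
  fix g g' assume g: "g \<in> khom sH sA (H x z) (A z y)" and g': "g' \<in> khom sH sA (H x z) (A z y)"
    and eq: "delta sA A mA rho x y z g = delta sA A mA rho x y z g'"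
  show "g = g'"
  proof
    fix h show "g h = g' h"
    proof (cases "h \<in> H x z")
      case True
      then obtain f where "is_can_preimage x z h f"
        using can_preimage_exists by blast
      then show ?thesis
        using delta_determines_apply[OF g True] delta_determines_apply[OF g' True] eq by simp
    qed (metis g g' khom_outside)
  qed
qed

section \<open>The inverse of \<open>\<delta>\<close>\<close>

lemma respects_balB_mA_bhom:
  assumes phi: "\<phi> \<in> bhom sH H uH sA A mA rho x z y"
  shows "respects_rels2 sA sA sA (A w x) (A x z) (balB A mA (B x) w x z) {0}
           (\<lambda>p. mA w x y (fst p) (\<phi> (snd p)))"
proof (rule respects_rels2_zeroI)
  fix p q assume "(p, q) \<in> balB A mA (B x) w x z"
  then obtain a b a' where pq: "p = (mA w x x a b, a')" "q = (a, mA x x z b a')"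
    and a: "a \<in> A w x" and b: "b \<in> B x" and a': "a' \<in> A x z"
    unfolding balB_def by blast
  have "b \<in> A x x" using coinvD[OF b] by blast
  with pq a a' show "mA w x y (fst p) (\<phi> (snd p)) = mA w x y (fst q) (\<phi> (snd q))"
    using bhom_khom[OF phi]
    by (simp add: bhom_B_linear[OF phi b a'] mA_assoc khom_closed)
qed (use bhom_khom[OF phi] in \<open>simp_all add: mA_add_left mA_add_right mA_scale_left mA_scale_right
       khom_closed khom_add khom_scale A_add A_scale\<close>)

text \<open>\<open>\<Sum> l \<phi>(r)\<close> only depends on \<open>can(\<Sum> l \<otimes> r)\<close>, since \<open>can\<close> is injective on \<open>A \<otimes>\<^sub>B A\<close>
  and \<open>\<phi>\<close> is \<open>B\<close>-linear.\<close>

lemma tsum_mA_bhom_can_cong: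
  assumes phi: "\<phi> \<in> bhom sH H uH sA A mA rho x z y"
    and f: "trep2 (A z x) (A x z) f" and f': "trep2 (A z x) (A x z) f'"
    and c: "teq2 sA sH (A z z) (H x z) {} (can mA rho z x z f) (can mA rho z x z f')"
  shows "tsum sA f (\<lambda>p. mA z x y (fst p) (\<phi> (snd p))) = tsum sA f' (\<lambda>p. mA z x y (fst p) (\<phi> (snd p)))"
  by (rule teq2_tsum_eq[OF module_sA can_injective[OF f f' c] respects_balB_mA_bhom[OF phi]])

lemma can_add:
  assumes "trep2 (A z x) (A x y) f" "trep2 (A z x) (A x y) f'"
  shows "can mA rho z x y (f + f') = can mA rho z x y f + can mA rho z x y f'"
  unfolding can_def by (rule tsum_add[OF module_fscale]) (use assms in \<open>simp_all add: trep2_def\<close>)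

lemma can_fscale:
  assumes "trep2 (A z x) (A x y) f"
  shows "can mA rho z x y (fscale r f) = fscale r (can mA rho z x y f)"
  unfolding can_def by (rule tsum_fscale[OF module_fscale]) (use assms in \<open>simp_all add: trep2_def\<close>)

lemma is_can_preimage_add:
  assumes "is_can_preimage x z h f" "is_can_preimage x z h' f'" "h \<in> H x z" "h' \<in> H x z"
  shows "is_can_preimage x z (h + h') (f + f')"
proof -
  have f: "trep2 (A z x) (A x z) f" "teq2 sA sH (A z z) (H x z) {} (can mA rho z x z f) (sing (uA z, h))"
    and f': "trep2 (A z x) (A x z) f'" "teq2 sA sH (A z z) (H x z) {} (can mA rho z x z f') (sing (uA z, h'))"
    using assms(1,2) by (auto simp: is_can_preimage_def)
  have "teq2 sA sH (A z z) (H x z) {} (can mA rho z x z f + can mA rho z x z f') (sing (uA z, h + h'))"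
    by (rule teq2_trans[OF teq2_add[OF f(2) f'(2)] teq2_sym[OF teq2_sing_add_right]])
       (simp_all add: uA_closed assms(3,4) H_add)
  then show ?thesis
    unfolding is_can_preimage_def can_add[OF f(1) f'(1)] using trep2_add[OF f(1) f'(1)] by blast
qed

lemma is_can_preimage_fscale:
  assumes "is_can_preimage x z h f" "h \<in> H x z"
  shows "is_can_preimage x z (sH r h) (fscale r f)"
proof -
  have f: "trep2 (A z x) (A x z) f" "teq2 sA sH (A z z) (H x z) {} (can mA rho z x z f) (sing (uA z, h))"
    using assms(1) by (auto simp: is_can_preimage_def)
  have "teq2 sA sH (A z z) (H x z) {} (fscale r (can mA rho z x z f)) (sing (uA z, sH r h))"
    by (rule teq2_trans[OF teq2_fscale[OF f(2)] teq2_sym[OF teq2_sing_scale_right]])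
       (simp_all add: uA_closed assms(2) H_scale)
  then show ?thesis
    unfolding is_can_preimage_def can_fscale[OF f(1)] using trep2_fscale[OF f(1)] by blast
qed

definition can_preimage :: "'x \<Rightarrow> 'x \<Rightarrow> 'h \<Rightarrow> 'a \<times> 'a \<Rightarrow> 'k"
  where "can_preimage x z h = (SOME f. is_can_preimage x z h f)"

lemma is_can_preimage_can_preimage: "h \<in> H x z \<Longrightarrow> is_can_preimage x z h (can_preimage x z h)"
  unfolding can_preimage_def by (rule someI_ex[OF can_preimage_exists])

definition delta_inv :: "'x \<Rightarrow> 'x \<Rightarrow> 'x \<Rightarrow> ('a \<Rightarrow> 'a) \<Rightarrow> 'h \<Rightarrow> 'a"
  where "delta_inv x y z \<phi> = (\<lambda>h. if h \<in> H x z
    then tsum sA (can_preimage x z h) (\<lambda>p. mA z x y (fst p) (\<phi> (snd p))) else 0)"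

lemma delta_inv_eq:
  assumes phi: "\<phi> \<in> bhom sH H uH sA A mA rho x z y" and h: "h \<in> H x z" and f: "is_can_preimage x z h f"
  shows "delta_inv x y z \<phi> h = tsum sA f (\<lambda>p. mA z x y (fst p) (\<phi> (snd p)))"
proof -
  have "delta_inv x y z \<phi> h = tsum sA (can_preimage x z h) (\<lambda>p. mA z x y (fst p) (\<phi> (snd p)))"
    using h by (simp add: delta_inv_def)
  also have "\<dots> = tsum sA f (\<lambda>p. mA z x y (fst p) (\<phi> (snd p)))"
    using is_can_preimage_can_preimage[OF h] f unfolding is_can_preimage_def
    by (blast intro: tsum_mA_bhom_can_cong[OF phi] teq2_trans[OF _ teq2_sym])
  finally show ?thesis .
qed

lemma delta_inv_khom:
  assumes phi: "\<phi> \<in> bhom sH H uH sA A mA rho x z y"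
  shows "delta_inv x y z \<phi> \<in> khom sH sA (H x z) (A z y)"
  unfolding khom_def
proof (intro CollectI conjI ballI allI impI)
  fix h assume h: "h \<in> H x z"
  have "trep2 (A z x) (A x z) (can_preimage x z h)"
    using is_can_preimage_can_preimage[OF h] by (simp add: is_can_preimage_def)
  then show "delta_inv x y z \<phi> h \<in> A z y"
    unfolding delta_inv_def using h
    by (auto simp: trep2_def intro!: tsum_in_A mA_closed bhom_closed[OF phi])
next
  fix h h' assume h: "h \<in> H x z" and h': "h' \<in> H x z"
  let ?f = "can_preimage x z h" and ?f' = "can_preimage x z h'"
  have f: "is_can_preimage x z h ?f" and f': "is_can_preimage x z h' ?f'"
    using is_can_preimage_can_preimage h h' by auto
  have "delta_inv x y z \<phi> (h + h') = tsum sA (?f + ?f') (\<lambda>p. mA z x y (fst p) (\<phi> (snd p)))"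
    by (rule delta_inv_eq[OF phi H_add[OF h h'] is_can_preimage_add[OF f f' h h']])
  also have "\<dots> = delta_inv x y z \<phi> h + delta_inv x y z \<phi> h'"
    using f f' h h' by (simp add: tsum_add[OF module_sA] is_can_preimage_def trep2_def delta_inv_def)
  finally show "delta_inv x y z \<phi> (h + h') = delta_inv x y z \<phi> h + delta_inv x y z \<phi> h'" .
next
  fix r h assume h: "h \<in> H x z"
  let ?f = "can_preimage x z h"
  have f: "is_can_preimage x z h ?f"
    using is_can_preimage_can_preimage h by auto
  have "delta_inv x y z \<phi> (sH r h) = tsum sA (fscale r ?f) (\<lambda>p. mA z x y (fst p) (\<phi> (snd p)))"
    by (rule delta_inv_eq[OF phi H_scale[OF h] is_can_preimage_fscale[OF f h]])
  also have "\<dots> = sA r (delta_inv x y z \<phi> h)"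
    using f h by (simp add: tsum_fscale[OF module_sA] is_can_preimage_def trep2_def delta_inv_def)
  finally show "delta_inv x y z \<phi> (sH r h) = sA r (delta_inv x y z \<phi> h)" .
next
  fix h assume "h \<notin> H x z"
  then show "delta_inv x y z \<phi> h = 0" by (simp add: delta_inv_def)
qed

lemma can_tsum:
  assumes "finite (fsupp f)" "\<And>p. p \<in> fsupp f \<Longrightarrow> finite (fsupp (G p))"
  shows "can mA rho z x y (tsum fscale f G) = tsum fscale f (\<lambda>p. can mA rho z x y (G p))"
  unfolding can_def by (rule tsum_tsum[OF module_fscale assms])

lemma can_map_left:
  assumes c: "c \<in> A w z" and f: "trep2 (A z x) (A x y) f"
  shows "can mA rho w x y (map_left (mA w z x c) f) = map_left (mA w z y c) (can mA rho z x y f)"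
proof -
  have fin: "finite (fsupp f)" and sup: "\<And>q. q \<in> fsupp f \<Longrightarrow> fst q \<in> A z x \<and> snd q \<in> A x y"
    using f by (auto simp: trep2_def)
  have "can mA rho w x y (map_left (mA w z x c) f)
      = tsum fscale f (\<lambda>q. map_left (mA w x y (mA w z x c (fst q))) (rho x y (snd q)))"
    unfolding can_eq_map_left by (simp add: tsum_map_left[OF module_fscale fin])
  also have "\<dots> = tsum fscale f (\<lambda>q. map_left (mA w z y c) (map_left (mA z x y (fst q)) (rho x y (snd q))))"
  proof (rule tsum_cong)
    fix q assume q: "q \<in> fsupp f"
    have "map_left (mA w z y c) (map_left (mA z x y (fst q)) (rho x y (snd q)))
        = map_left (\<lambda>b. mA w z y c (mA z x y (fst q) b)) (rho x y (snd q))"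
      using sup[OF q] by (simp add: map_left_map_left finite_fsupp_rho)
    also have "\<dots> = map_left (mA w x y (mA w z x c (fst q))) (rho x y (snd q))"
      using sup[OF q] fsupp_rho[of "snd q" x y] c by (intro map_left_cong) (simp add: mA_assoc)
    finally show "map_left (mA w x y (mA w z x c (fst q))) (rho x y (snd q))
        = map_left (mA w z y c) (map_left (mA z x y (fst q)) (rho x y (snd q)))" ..
  qed
  also have "\<dots> = map_left (mA w z y c) (can mA rho z x y f)"
    unfolding can_eq_map_left using sup
    by (simp add: map_left_tsum[OF fin] finite_fsupp_map_left finite_fsupp_rho)
  finally show ?thesis .
qed

lemma can_unit_left:
  assumes a: "a \<in> A x y"
  shows "can mA rho x x y (sing (uA x, a)) = rho x y a"
proof -
  have "can mA rho x x y (sing (uA x, a)) = map_left (mA x x y (uA x)) (rho x y a)"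
    by (simp add: can_eq_map_left tsum_sing[OF module_fscale])
  also have "\<dots> = map_left (\<lambda>b. b) (rho x y a)"
    using fsupp_rho[OF a] by (intro map_left_cong) (simp add: mA_unit_left)
  finally show ?thesis
    by (simp add: map_left_id finite_fsupp_rho[OF a])
qed

lemma translation_balanced_eq:
  assumes a: "a \<in> A x z"
  shows "teq2 sA sA (A x x) (A x z) (balB A mA (B x) x x z)
    (tsum fscale (rho x z a) (\<lambda>p. map_left (mA x z x (fst p)) (can_preimage x z (snd p))))
    (sing (uA x, a))"
proof -
  let ?f = "\<lambda>p. can_preimage x z (snd p)"
  define T where "T = tsum fscale (rho x z a) (\<lambda>p. map_left (mA x z x (fst p)) (?f p))"
  have sup: "\<And>p. p \<in> fsupp (rho x z a) \<Longrightarrow> fst p \<in> A x z \<and> snd p \<in> H x z"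
    using fsupp_rho[OF a] by blast
  have f: "trep2 (A z x) (A x z) (?f p)"
    and cf: "teq2 sA sH (A z z) (H x z) {} (can mA rho z x z (?f p)) (sing (uA z, snd p))"
    if "p \<in> fsupp (rho x z a)" for p
    using is_can_preimage_can_preimage sup[OF that] by (auto simp: is_can_preimage_def)
  have finf: "finite (fsupp (?f p))" if "p \<in> fsupp (rho x z a)" for p
    using f[OF that] by (simp add: trep2_def)
  have trT: "trep2 (A x x) (A x z) T"
    unfolding T_def
  proof (rule trep2_tsum[OF finite_fsupp_rho[OF a]])
    fix p assume p: "p \<in> fsupp (rho x z a)"
    show "trep2 (A x x) (A x z) (map_left (mA x z x (fst p)) (?f p))"
      by (rule trep2_map_left[OF f[OF p]]) (use sup[OF p] in \<open>simp add: mA_closed\<close>)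
  qed
  have "can mA rho x x z T
      = tsum fscale (rho x z a) (\<lambda>p. can mA rho x x z (map_left (mA x z x (fst p)) (?f p)))"
    unfolding T_def by (rule can_tsum[OF finite_fsupp_rho[OF a] finite_fsupp_map_left[OF finf]])
  also have "\<dots> = tsum fscale (rho x z a) (\<lambda>p. map_left (mA x z z (fst p)) (can mA rho z x z (?f p)))"
    using sup f by (intro tsum_cong can_map_left) auto
  finally have can_T: "can mA rho x x z T
      = tsum fscale (rho x z a) (\<lambda>p. map_left (mA x z z (fst p)) (can mA rho z x z (?f p)))" .
  have "teq2 sA sH (A x z) (H x z) {} (can mA rho x x z T)
      (tsum fscale (rho x z a) (\<lambda>p. map_left (mA x z z (fst p)) (sing (uA z, snd p))))"
    unfolding can_T using sup cf
    by (intro teq2_tsum[OF finite_fsupp_rho[OF a]] teq2_map_left[OF linear_on_mA_left]) auto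
  moreover have "tsum fscale (rho x z a) (\<lambda>p. map_left (mA x z z (fst p)) (sing (uA z, snd p)))
      = tsum fscale (rho x z a) sing"
    using sup by (intro tsum_cong) (simp add: map_left_sing mA_unit_right)
  ultimately have "teq2 sA sH (A x z) (H x z) {} (can mA rho x x z T) (can mA rho x x z (sing (uA x, a)))"
    by (simp add: can_unit_left[OF a] tsum_fscale_sing[OF finite_fsupp_rho[OF a]])
  then show ?thesis
    unfolding T_def[symmetric] by (rule can_injective[OF trT trep2_sing[OF uA_closed a]])
qed

lemma delta_delta_inv:
  assumes phi: "\<phi> \<in> bhom sH H uH sA A mA rho x z y"
  shows "delta sA A mA rho x y z (delta_inv x y z \<phi>) = \<phi>"
proof
  fix a show "delta sA A mA rho x y z (delta_inv x y z \<phi>) a = \<phi> a"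
  proof (cases "a \<in> A x z")
    case a: True
    let ?f = "\<lambda>p. can_preimage x z (snd p)" and ?F = "\<lambda>p. mA x x y (fst p) (\<phi> (snd p))"
    have sup: "\<And>p. p \<in> fsupp (rho x z a) \<Longrightarrow> fst p \<in> A x z \<and> snd p \<in> H x z"
      using fsupp_rho[OF a] by blast
    have f: "trep2 (A z x) (A x z) (?f p)" if "p \<in> fsupp (rho x z a)" for p
      using is_can_preimage_can_preimage sup[OF that] by (auto simp: is_can_preimage_def)
    have finf: "finite (fsupp (?f p))"
      and supf: "\<And>q. q \<in> fsupp (?f p) \<Longrightarrow> fst q \<in> A z x \<and> snd q \<in> A x z"
      if "p \<in> fsupp (rho x z a)" for p
      using f[OF that] by (auto simp: trep2_def)
    have "delta sA A mA rho x y z (delta_inv x y z \<phi>) a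
        = tsum sA (rho x z a) (\<lambda>p. tsum sA (?f p) (\<lambda>q. mA x z y (fst p) (mA z x y (fst q) (\<phi> (snd q)))))"
      unfolding delta_apply[OF a] delta_inv_def
    proof (rule tsum_cong)
      fix p assume p: "p \<in> fsupp (rho x z a)"
      show "mA x z y (fst p) (if snd p \<in> H x z then tsum sA (?f p) (\<lambda>q. mA z x y (fst q) (\<phi> (snd q))) else 0)
          = tsum sA (?f p) (\<lambda>q. mA x z y (fst p) (mA z x y (fst q) (\<phi> (snd q))))"
        using sup[OF p] supf[OF p]
        by (simp add: mA_tsum_right mA_closed bhom_closed[OF phi])
    qed
    also have "\<dots> = tsum sA (rho x z a) (\<lambda>p. tsum sA (map_left (mA x z x (fst p)) (?f p)) ?F)"
    proof (rule tsum_cong)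
      fix p assume p: "p \<in> fsupp (rho x z a)"
      show "tsum sA (?f p) (\<lambda>q. mA x z y (fst p) (mA z x y (fst q) (\<phi> (snd q))))
          = tsum sA (map_left (mA x z x (fst p)) (?f p)) ?F"
        using sup[OF p] supf[OF p]
        by (simp add: tsum_map_left[OF module_sA finf[OF p]] mA_assoc bhom_closed[OF phi] cong: tsum_cong)
    qed
    also have "\<dots> = tsum sA (tsum fscale (rho x z a) (\<lambda>p. map_left (mA x z x (fst p)) (?f p))) ?F"
      by (rule tsum_tsum[symmetric, OF module_sA finite_fsupp_rho[OF a] finite_fsupp_map_left[OF finf]])
    also have "\<dots> = tsum sA (sing (uA x, a)) ?F"
      by (rule teq2_tsum_eq[OF module_sA translation_balanced_eq[OF a] respects_balB_mA_bhom[OF phi]])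
    also have "\<dots> = \<phi> a"
      by (simp add: tsum_sing[OF module_sA] mA_unit_left bhom_closed[OF phi a])
    finally show ?thesis .
  qed (use bhom_khom[OF phi] in \<open>simp add: delta_outside khom_outside\<close>)
qed

section \<open>\<open>\<delta>\<close> is a morphism of clusters\<close>

text \<open>\<open>c \<otimes> h \<otimes> h' \<mapsto> c g'(h')\<^sub>[\<^sub>0\<^sub>] g(h g'(h')\<^sub>[\<^sub>1\<^sub>])\<close>. Evaluated on \<open>a\<^sub>[\<^sub>0\<^sub>] \<otimes> a\<^sub>[\<^sub>1\<^sub>](\<^sub>1\<^sub>) \<otimes> a\<^sub>[\<^sub>1\<^sub>](\<^sub>2\<^sub>)\<close> it gives
  \<open>\<delta>(g # g')(a)\<close>, evaluated on \<open>a\<^sub>[\<^sub>0\<^sub>]\<^sub>[\<^sub>0\<^sub>] \<otimes> a\<^sub>[\<^sub>0\<^sub>]\<^sub>[\<^sub>1\<^sub>] \<otimes> a\<^sub>[\<^sub>1\<^sub>]\<close> it gives \<open>\<delta>(g)(\<delta>(g')(a))\<close>.\<close>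

definition kop_kernel :: "('h \<Rightarrow> 'a) \<Rightarrow> ('h \<Rightarrow> 'a) \<Rightarrow> 'x \<Rightarrow> 'x \<Rightarrow> 'x \<Rightarrow> 'x \<Rightarrow> 'a \<times> 'h \<times> 'h \<Rightarrow> 'a"
  where "kop_kernel g g' x y z u t = tsum sA (rho u z (g' (snd (snd t))))
    (\<lambda>q. mA x u y (fst t) (mA u z y (fst q) (g (mH x u z (fst (snd t)) (snd q)))))"

lemma kop_apply: "h \<in> H x u \<Longrightarrow> kop sA H mH DH mA rho x y z u g g' h = tsum sA (DH x u h)
    (\<lambda>p. tsum sA (rho u z (g' (snd p))) (\<lambda>q. mA u z y (fst q) (g (mH x u z (fst p) (snd q)))))"
  by (simp add: kop_def)

lemma trilinear_on_kop_kernel: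
  assumes g: "g \<in> khom sH sA (H x z) (A z y)" and g': "g' \<in> khom sH sA (H x u) (A u z)"
  shows "trilinear_on sA sA sH sH (A x u) (H x u) (H x u) (kop_kernel g g' x y z u)"
proof -
  let ?F = "\<lambda>c h q. mA x u y c (mA u z y (fst q) (g (mH x u z h (snd q))))"
  have kernel: "kop_kernel g g' x y z u (c, h, h') = tsum sA (rho u z (g' h')) (?F c h)" for c h h'
    by (simp add: kop_kernel_def)
  have closed: "mA u z y b (g (mH x u z h k)) \<in> A u y"
    if "b \<in> A u z" "h \<in> H x u" "k \<in> H u z" for b h k
    using that by (intro mA_closed khom_closed[OF g] mH_closed)
  have bil: "bilinear_on sA sA sH (A u z) (H u z) (?F c h)" if "c \<in> A x u" "h \<in> H x u" for c h
    using that
    by (intro bilinear_onI) (simp_all add: mA_add_left mA_add_right mA_scale_left mA_scale_right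
        mH_add_right mH_scale_right mH_closed khom_closed[OF g] khom_add[OF g] khom_scale[OF g] mA_closed)
  have g'_closed: "h \<in> H x u \<Longrightarrow> g' h \<in> A u z" for h by (rule khom_closed[OF g'])
  show ?thesis
    unfolding trilinear_on_def kernel
  proof (intro conjI ballI allI)
    fix m m' n p assume "m \<in> A x u" "m' \<in> A x u" "n \<in> H x u" "p \<in> H x u"
    then show "tsum sA (rho u z (g' p)) (?F (m + m') n)
        = tsum sA (rho u z (g' p)) (?F m n) + tsum sA (rho u z (g' p)) (?F m' n)"
      using fsupp_rho[OF g'_closed]
      by (simp add: tsum_add_right[OF module_sA, symmetric] mA_add_left closed cong: tsum_cong_simp)
  next
    fix m n n' p assume "m \<in> A x u" "n \<in> H x u" "n' \<in> H x u" "p \<in> H x u"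
    then show "tsum sA (rho u z (g' p)) (?F m (n + n'))
        = tsum sA (rho u z (g' p)) (?F m n) + tsum sA (rho u z (g' p)) (?F m n')"
      using fsupp_rho[OF g'_closed]
      by (simp add: tsum_add_right[OF module_sA, symmetric] mH_add_left khom_add[OF g] mH_closed
          mA_add_right khom_closed[OF g] closed cong: tsum_cong_simp)
  next
    fix m n p p' assume "m \<in> A x u" "n \<in> H x u" "p \<in> H x u" "p' \<in> H x u"
    then show "tsum sA (rho u z (g' (p + p'))) (?F m n)
        = tsum sA (rho u z (g' p)) (?F m n) + tsum sA (rho u z (g' p')) (?F m n)"
      by (simp add: khom_add[OF g'] tsum_rho_add[OF bil] g'_closed)
  next
    fix r m n p assume "m \<in> A x u" "n \<in> H x u" "p \<in> H x u"
    then show "tsum sA (rho u z (g' p)) (?F (sA r m) n) = sA r (tsum sA (rho u z (g' p)) (?F m n))"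
      using fsupp_rho[OF g'_closed]
      by (simp add: tsum_scale_right[OF module_sA, symmetric] mA_scale_left closed cong: tsum_cong_simp)
  next
    fix r m n p assume "m \<in> A x u" "n \<in> H x u" "p \<in> H x u"
    then show "tsum sA (rho u z (g' p)) (?F m (sH r n)) = sA r (tsum sA (rho u z (g' p)) (?F m n))"
      using fsupp_rho[OF g'_closed]
      by (simp add: tsum_scale_right[OF module_sA, symmetric] mH_scale_left khom_scale[OF g] mH_closed
          mA_scale_right khom_closed[OF g] closed cong: tsum_cong_simp)
  next
    fix r m n p assume "m \<in> A x u" "n \<in> H x u" "p \<in> H x u"
    then show "tsum sA (rho u z (g' (sH r p))) (?F m n) = sA r (tsum sA (rho u z (g' p)) (?F m n))"
      by (simp add: khom_scale[OF g'] tsum_rho_scale[OF bil] g'_closed)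
  qed
qed

lemma delta_kop_eq_kernel_coproduct:
  assumes g: "g \<in> khom sH sA (H x z) (A z y)" and g': "g' \<in> khom sH sA (H x u) (A u z)"
    and a: "a \<in> A x u"
  shows "delta sA A mA rho x y u (kop sA H mH DH mA rho x y z u g g') a
    = tsum sA (tsum fscale (rho x u a) (\<lambda>p. tr3 (fst p) (DH x u (snd p)))) (kop_kernel g g' x y z u)"
proof -
  have sup: "\<And>p. p \<in> fsupp (rho x u a) \<Longrightarrow> fst p \<in> A x u \<and> snd p \<in> H x u"
    using fsupp_rho[OF a] by blast
  have "delta sA A mA rho x y u (kop sA H mH DH mA rho x y z u g g') a
      = tsum sA (rho x u a) (\<lambda>p. tsum sA (DH x u (snd p)) (\<lambda>r. kop_kernel g g' x y z u (fst p, fst r, snd r)))"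
    unfolding delta_apply[OF a]
  proof (rule tsum_cong)
    fix p assume p: "p \<in> fsupp (rho x u a)"
    have p1: "fst p \<in> A x u" and p2: "snd p \<in> H x u" using sup[OF p] by auto
    have inner: "mA x u y (fst p) (tsum sA (rho u z (g' (snd r))) (\<lambda>q. mA u z y (fst q) (g (mH x u z (fst r) (snd q)))))
        = kop_kernel g g' x y z u (fst p, fst r, snd r)" if r: "r \<in> fsupp (DH x u (snd p))" for r
      unfolding kop_kernel_def using fsupp_DH[OF p2 r] fsupp_rho[OF khom_closed[OF g']]
      by (simp, intro mA_tsum_right[OF p1]) (blast intro: mA_closed khom_closed[OF g] mH_closed)
    have "mA x u y (fst p) (kop sA H mH DH mA rho x y z u g g' (snd p))
        = tsum sA (DH x u (snd p)) (\<lambda>r. mA x u y (fst p) (tsum sA (rho u z (g' (snd r)))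
            (\<lambda>q. mA u z y (fst q) (g (mH x u z (fst r) (snd q))))))"
      unfolding kop_apply[OF p2]
      by (rule mA_tsum_right[OF p1], rule tsum_in_A)
         (use fsupp_DH[OF p2] fsupp_rho[OF khom_closed[OF g']] in \<open>blast intro: mA_closed khom_closed[OF g] mH_closed\<close>)
    also have "\<dots> = tsum sA (DH x u (snd p)) (\<lambda>r. kop_kernel g g' x y z u (fst p, fst r, snd r))"
      by (rule tsum_cong, rule inner)
    finally show "mA x u y (fst p) (kop sA H mH DH mA rho x y z u g g' (snd p))
        = tsum sA (DH x u (snd p)) (\<lambda>r. kop_kernel g g' x y z u (fst p, fst r, snd r))" .
  qed
  also have "\<dots> = tsum sA (tsum fscale (rho x u a) (\<lambda>p. tr3 (fst p) (DH x u (snd p)))) (kop_kernel g g' x y z u)"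
    using sup
    by (simp add: tsum_tsum[OF module_sA] finite_fsupp_rho[OF a] finite_fsupp_tr3 finite_fsupp_DH
        tsum_tr3[OF module_sA] split_beta cong: tsum_cong_simp)
  finally show ?thesis .
qed

lemma delta_comp_eq_kernel_coaction:
  assumes g: "g \<in> khom sH sA (H x z) (A z y)" and g': "g' \<in> khom sH sA (H x u) (A u z)"
    and a: "a \<in> A x u"
  shows "(delta sA A mA rho x y z g \<circ> delta sA A mA rho x z u g') a
    = tsum sA (tsum fscale (rho x u a) (\<lambda>p. tl3 (rho x u (fst p)) (snd p))) (kop_kernel g g' x y z u)"
proof -
  have sup: "\<And>p. p \<in> fsupp (rho x u a) \<Longrightarrow> fst p \<in> A x u \<and> snd p \<in> H x u"
    using fsupp_rho[OF a] by blast
  have "(delta sA A mA rho x y z g \<circ> delta sA A mA rho x z u g') a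
      = tsum sA (rho x z (tsum sA (rho x u a) (\<lambda>p. mA x u z (fst p) (g' (snd p)))))
          (\<lambda>p. mA x z y (fst p) (g (snd p)))"
    by (simp only: comp_def delta_apply[OF delta_closed[OF g' a]], simp only: delta_apply[OF a])
  also have "\<dots> = tsum sA (rho x u a)
      (\<lambda>p. tsum sA (rho x z (mA x u z (fst p) (g' (snd p)))) (\<lambda>p. mA x z y (fst p) (g (snd p))))"
    by (rule tsum_rho_tsum[OF bilinear_on_mA_apply[OF g]])
       (use sup in \<open>blast intro: mA_closed khom_closed[OF g']\<close>)
  also have "\<dots> = tsum sA (rho x u a) (\<lambda>p. tsum sA (rho x u (fst p)) (\<lambda>q. kop_kernel g g' x y z u (fst q, snd q, snd p)))"
  proof (rule tsum_cong)
    fix p assume p: "p \<in> fsupp (rho x u a)"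
    have p1: "fst p \<in> A x u" and p2: "snd p \<in> H x u" using sup[OF p] by auto
    show "tsum sA (rho x z (mA x u z (fst p) (g' (snd p)))) (\<lambda>p. mA x z y (fst p) (g (snd p)))
        = tsum sA (rho x u (fst p)) (\<lambda>q. kop_kernel g g' x y z u (fst q, snd q, snd p))"
      unfolding tsum_rho_mult[OF p1 khom_closed[OF g' p2] bilinear_on_mA_apply[OF g]] kop_kernel_def
      using fsupp_rho[OF p1] fsupp_rho[OF khom_closed[OF g' p2]]
      by (intro tsum_cong) (simp add: mA_assoc khom_closed[OF g] mH_closed cong: tsum_cong_simp)
  qed
  also have "\<dots> = tsum sA (tsum fscale (rho x u a) (\<lambda>p. tl3 (rho x u (fst p)) (snd p))) (kop_kernel g g' x y z u)"
    using sup
    by (simp add: tsum_tsum[OF module_sA] finite_fsupp_rho[OF a] finite_fsupp_tl3 finite_fsupp_rho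
        tsum_tl3[OF module_sA] split_beta cong: tsum_cong_simp)
  finally show ?thesis .
qed

lemma delta_kop:
  assumes g: "g \<in> khom sH sA (H x z) (A z y)" and g': "g' \<in> khom sH sA (H x u) (A u z)"
  shows "delta sA A mA rho x y u (kop sA H mH DH mA rho x y z u g g')
    = delta sA A mA rho x y z g \<circ> delta sA A mA rho x z u g'"
proof
  fix a
  show "delta sA A mA rho x y u (kop sA H mH DH mA rho x y z u g g') a
    = (delta sA A mA rho x y z g \<circ> delta sA A mA rho x z u g') a"
  proof (cases "a \<in> A x u")
    case True
    then show ?thesis
      unfolding delta_kop_eq_kernel_coproduct[OF g g' True] delta_comp_eq_kernel_coaction[OF g g' True]
      by (rule teq3_tsum_eq[OF module_sA rho_coassoc trilinear_on_kop_kernel[OF g g'], symmetric])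
  qed (simp add: delta_outside delta_apply[OF A_zero] tsum_rho_zero[OF bilinear_on_mA_apply[OF g]])
qed

lemma bij_betw_delta:
  "bij_betw (delta sA A mA rho x y z) (khom sH sA (H x z) (A z y)) (bhom sH H uH sA A mA rho x z y)"
  unfolding bij_betw_def
proof (intro conjI inj_on_delta equalityI image_subsetI delta_bhom subsetI)
  fix \<phi> assume "\<phi> \<in> bhom sH H uH sA A mA rho x z y"
  then show "\<phi> \<in> delta sA A mA rho x y z ` khom sH sA (H x z) (A z y)"
    by (metis delta_delta_inv delta_inv_khom image_eqI)
qed

lemma inv_into_delta:
  assumes phi: "\<phi> \<in> bhom sH H uH sA A mA rho x z y" and h: "h \<in> H x z" and f: "is_can_preimage x z h f"
  shows "inv_into (khom sH sA (H x z) (A z y)) (delta sA A mA rho x y z) \<phi> h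
    = tsum sA f (\<lambda>p. mA z x y (fst p) (\<phi> (snd p)))"
proof -
  have "inv_into (khom sH sA (H x z) (A z y)) (delta sA A mA rho x y z) \<phi> = delta_inv x y z \<phi>"
    using inv_into_f_f[OF inj_on_delta delta_inv_khom[OF phi]] by (simp add: delta_delta_inv[OF phi])
  then show ?thesis by (simp add: delta_inv_eq[OF phi h f])
qed

end

theorem proposition7p2:
  fixes sH :: "'k::comm_ring_1 \<Rightarrow> 'h::ab_group_add \<Rightarrow> 'h"
    and H :: "'x \<Rightarrow> 'x \<Rightarrow> 'h set"
    and mH :: "'x \<Rightarrow> 'x \<Rightarrow> 'x \<Rightarrow> 'h \<Rightarrow> 'h \<Rightarrow> 'h" and uH :: "'x \<Rightarrow> 'h"
    and DH :: "'x \<Rightarrow> 'x \<Rightarrow> 'h \<Rightarrow> 'h \<times> 'h \<Rightarrow> 'k" and eH :: "'x \<Rightarrow> 'x \<Rightarrow> 'h \<Rightarrow> 'k"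
    and sA :: "'k \<Rightarrow> 'a::ab_group_add \<Rightarrow> 'a"
    and A :: "'x \<Rightarrow> 'x \<Rightarrow> 'a set"
    and mA :: "'x \<Rightarrow> 'x \<Rightarrow> 'x \<Rightarrow> 'a \<Rightarrow> 'a \<Rightarrow> 'a" and uA :: "'x \<Rightarrow> 'a"
    and rho :: "'x \<Rightarrow> 'x \<Rightarrow> 'a \<Rightarrow> 'a \<times> 'h \<Rightarrow> 'k"
  assumes H: "semi_hopf_cat sH H mH uH DH eH"
    and A: "comodule_cat sH H mH uH DH eH sA A mA uA rho"
    and Gal: "galois_ext sH H uH sA A mA rho"
  shows
    "(\<forall>x y z. bij_betw (delta sA A mA rho x y z) (khom sH sA (H x z) (A z y))
                        (bhom sH H uH sA A mA rho x z y))
   \<and> (\<forall>x y z. \<forall>\<phi>\<in>bhom sH H uH sA A mA rho x z y. \<forall>h\<in>H x z. \<forall>f.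
        trep2 (A z x) (A x z) f
        \<and> teq2 sA sH (A z z) (H x z) {} (can mA rho z x z f) (sing (uA z, h))
        \<longrightarrow> inv_into (khom sH sA (H x z) (A z y)) (delta sA A mA rho x y z) \<phi> h
            = tsum sA f (\<lambda>p. mA z x y (fst p) (\<phi> (snd p))))
   \<and> (\<forall>x y z u g g'. g \<in> khom sH sA (H x z) (A z y) \<and> g' \<in> khom sH sA (H x u) (A u z) \<longrightarrow>
        delta sA A mA rho x y u (kop sA H mH DH mA rho x y z u g g')
          = delta sA A mA rho x y z g \<circ> delta sA A mA rho x z u g')
   \<and> (\<forall>x y. delta sA A mA rho x y y (kunit sA H eH uA x y) = (\<lambda>a. if a \<in> A x y then a else 0))"
proof -
  interpret galois_category_ext sH H mH uH DH eH sA A mA uA rho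
    by (rule galois_category_ext.intro[OF H A Gal])
  show ?thesis
    using bij_betw_delta inv_into_delta[unfolded is_can_preimage_def] delta_kop delta_kunit by blast
qed

end
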